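(* Let $S$ be a finite inverse monoid with underlying groupoid $G$, and let $\beta\colon S\to\mathsf{K}(G)$ be the map $\beta(a)=a^{\downarrow}=\{x\in S: x\le a\}$. Let $\alpha\colon S\to T$ be any monoid homomorphism to a Boolean inverse monoid $T$. Then there is a unique morphism of Boolean inverse monoids $\gamma\colon \mathsf{K}(G)\to T$ such that $\gamma\beta=\alpha$.
   Context: An inverse semigroup is a semigroup in which each $s$ has a unique $s^{-1}$ with $s=ss^{-1}s$, $s^{-1}=s^{-1}ss^{-1}$; natural partial order $s\le t$ iff $s=ts^{-1}s$. The underlying groupoid $G$ of $S$ is $S$ with the restricted product $s\cdot t=st$, defined exactly when $s^{-1}s=tt^{-1}$; its identities are the idempotents of $S$, with $\mathbf{d}(s)=s^{-1}s$, $\mathbf{r}(s)=ss^{-1}$. For a groupoid $G$, a local bisection is a subset $A$ with $AA^{-1}$ and $A^{-1}A$ consisting only of identities, where $AB=\{ab:a\in A,b\in B,\mathbf{d}(a)=\mathbf{r}(b)\}$; $\mathsf{K}(G)$ is the inverse monoid of local bisections under this multiplication (it is a Boolean inverse monoid, and $a^{\downarrow}$ is a local bisection). Elements $a,b$ are compatible if $a^{-1}b,ab^{-1}$ are idempotents. A Boolean inverse monoid is an inverse monoid with zero in which finite compatible subsets have joins with respect to $\le$, multiplication distributes over them, and the idempotents form a Boolean algebra. A morphism of Boolean inverse monoids is a monoid homomorphism preserving zero and binary (compatible) joins. *)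

theory Defs
  imports "HOL-Library.FuncSet"
begin

definition inverse_monoid :: "'a set \<Rightarrow> ('a \<Rightarrow> 'a \<Rightarrow> 'a) \<Rightarrow> 'a \<Rightarrow> bool" where
  "inverse_monoid M m u \<longleftrightarrow>
     u \<in> M \<and> (\<forall>x\<in>M. \<forall>y\<in>M. m x y \<in> M)
   \<and> (\<forall>x\<in>M. \<forall>y\<in>M. \<forall>z\<in>M. m (m x y) z = m x (m y z))
   \<and> (\<forall>x\<in>M. m u x = x \<and> m x u = x)
   \<and> (\<forall>x\<in>M. \<exists>!y. y \<in> M \<and> x = m (m x y) x \<and> y = m (m y x) y)"

definition monoid_hom :: "'a set \<Rightarrow> ('a \<Rightarrow> 'a \<Rightarrow> 'a) \<Rightarrow> 'a \<Rightarrow>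
    'b set \<Rightarrow> ('b \<Rightarrow> 'b \<Rightarrow> 'b) \<Rightarrow> 'b \<Rightarrow> ('a \<Rightarrow> 'b) \<Rightarrow> bool" where
  "monoid_hom M m u N n v f \<longleftrightarrow>
     f \<in> M \<rightarrow> N \<and> (\<forall>x\<in>M. \<forall>y\<in>M. f (m x y) = n (f x) (f y)) \<and> f u = v"

definition invm :: "'a set \<Rightarrow> ('a \<Rightarrow> 'a \<Rightarrow> 'a) \<Rightarrow> 'a \<Rightarrow> 'a" where
  "invm M m x = (THE y. y \<in> M \<and> x = m (m x y) x \<and> y = m (m y x) y)"

definition nleq :: "'a set \<Rightarrow> ('a \<Rightarrow> 'a \<Rightarrow> 'a) \<Rightarrow> 'a \<Rightarrow> 'a \<Rightarrow> bool" where
  "nleq M m s t \<longleftrightarrow> s = m t (m (invm M m s) s)"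

definition idems :: "'a set \<Rightarrow> ('a \<Rightarrow> 'a \<Rightarrow> 'a) \<Rightarrow> 'a set" where
  "idems M m = {e \<in> M. m e e = e}"

definition compatible :: "'a set \<Rightarrow> ('a \<Rightarrow> 'a \<Rightarrow> 'a) \<Rightarrow> 'a \<Rightarrow> 'a \<Rightarrow> bool" where
  "compatible M m a b \<longleftrightarrow>
     m (invm M m a) b \<in> idems M m \<and> m a (invm M m b) \<in> idems M m"

definition is_join :: "'a set \<Rightarrow> ('a \<Rightarrow> 'a \<Rightarrow> 'a) \<Rightarrow> 'a set \<Rightarrow> 'a \<Rightarrow> bool" where
  "is_join M m X j \<longleftrightarrow> j \<in> M \<and> (\<forall>x\<in>X. nleq M m x j)
     \<and> (\<forall>y\<in>M. (\<forall>x\<in>X. nleq M m x y) \<longrightarrow> nleq M m j y)"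

definition is_lub_E :: "'a set \<Rightarrow> ('a \<Rightarrow> 'a \<Rightarrow> 'a) \<Rightarrow> 'a \<Rightarrow> 'a \<Rightarrow> 'a \<Rightarrow> bool" where
  "is_lub_E M m e f j \<longleftrightarrow> j \<in> idems M m \<and> nleq M m e j \<and> nleq M m f j
     \<and> (\<forall>g\<in>idems M m. nleq M m e g \<and> nleq M m f g \<longrightarrow> nleq M m j g)"

definition is_glb_E :: "'a set \<Rightarrow> ('a \<Rightarrow> 'a \<Rightarrow> 'a) \<Rightarrow> 'a \<Rightarrow> 'a \<Rightarrow> 'a \<Rightarrow> bool" where
  "is_glb_E M m e f j \<longleftrightarrow> j \<in> idems M m \<and> nleq M m j e \<and> nleq M m j f
     \<and> (\<forall>g\<in>idems M m. nleq M m g e \<and> nleq M m g f \<longrightarrow> nleq M m g j)"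

definition joinE :: "'a set \<Rightarrow> ('a \<Rightarrow> 'a \<Rightarrow> 'a) \<Rightarrow> 'a \<Rightarrow> 'a \<Rightarrow> 'a" where
  "joinE M m e f = (THE j. is_lub_E M m e f j)"

definition meetE :: "'a set \<Rightarrow> ('a \<Rightarrow> 'a \<Rightarrow> 'a) \<Rightarrow> 'a \<Rightarrow> 'a \<Rightarrow> 'a" where
  "meetE M m e f = (THE j. is_glb_E M m e f j)"

definition idems_boolean :: "'a set \<Rightarrow> ('a \<Rightarrow> 'a \<Rightarrow> 'a) \<Rightarrow> 'a \<Rightarrow> 'a \<Rightarrow> bool" where
  "idems_boolean M m u z \<longleftrightarrow>
     z \<in> idems M m \<and> u \<in> idems M m
   \<and> (\<forall>e\<in>idems M m. nleq M m z e \<and> nleq M m e u)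
   \<and> (\<forall>e\<in>idems M m. \<forall>f\<in>idems M m. (\<exists>j. is_lub_E M m e f j) \<and> (\<exists>j. is_glb_E M m e f j))
   \<and> (\<forall>e\<in>idems M m. \<forall>f\<in>idems M m. \<forall>g\<in>idems M m.
        meetE M m e (joinE M m f g) = joinE M m (meetE M m e f) (meetE M m e g))
   \<and> (\<forall>e\<in>idems M m. \<exists>f\<in>idems M m. meetE M m e f = z \<and> joinE M m e f = u)"

definition boolean_inverse_monoid ::
    "'a set \<Rightarrow> ('a \<Rightarrow> 'a \<Rightarrow> 'a) \<Rightarrow> 'a \<Rightarrow> 'a \<Rightarrow> bool" where
  "boolean_inverse_monoid M m u z \<longleftrightarrow>
     inverse_monoid M m u
   \<and> z \<in> M \<and> (\<forall>x\<in>M. m z x = z \<and> m x z = z)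
   \<and> (\<forall>X. finite X \<and> X \<subseteq> M \<and> (\<forall>a\<in>X. \<forall>b\<in>X. compatible M m a b)
          \<longrightarrow> (\<exists>j. is_join M m X j))
   \<and> (\<forall>X j. finite X \<and> X \<subseteq> M \<and> (\<forall>a\<in>X. \<forall>b\<in>X. compatible M m a b) \<and> is_join M m X j
          \<longrightarrow> (\<forall>s\<in>M. is_join M m ((\<lambda>x. m s x) ` X) (m s j)
                    \<and> is_join M m ((\<lambda>x. m x s) ` X) (m j s)))
   \<and> idems_boolean M m u z"

definition bim_morphism :: "'a set \<Rightarrow> ('a \<Rightarrow> 'a \<Rightarrow> 'a) \<Rightarrow> 'a \<Rightarrow> 'a \<Rightarrow>
    'b set \<Rightarrow> ('b \<Rightarrow> 'b \<Rightarrow> 'b) \<Rightarrow> 'b \<Rightarrow> 'b \<Rightarrow> ('a \<Rightarrow> 'b) \<Rightarrow> bool" where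
  "bim_morphism M m u z N n v w f \<longleftrightarrow>
     monoid_hom M m u N n v f \<and> f z = w
   \<and> (\<forall>a\<in>M. \<forall>b\<in>M. \<forall>j. compatible M m a b \<and> is_join M m {a, b} j
          \<longrightarrow> is_join N n {f a, f b} (f j))"

text \<open>Underlying groupoid of an inverse semigroup: d(s) = s^-1 s, r(s) = s s^-1,
  product s.t = st defined iff d(s) = r(t).  Products and inverses of subsets.\<close>
definition gdom :: "'a set \<Rightarrow> ('a \<Rightarrow> 'a \<Rightarrow> 'a) \<Rightarrow> 'a \<Rightarrow> 'a" where
  "gdom M m s = m (invm M m s) s"

definition gran :: "'a set \<Rightarrow> ('a \<Rightarrow> 'a \<Rightarrow> 'a) \<Rightarrow> 'a \<Rightarrow> 'a" where
  "gran M m s = m s (invm M m s)"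

definition gprod :: "'a set \<Rightarrow> ('a \<Rightarrow> 'a \<Rightarrow> 'a) \<Rightarrow> 'a set \<Rightarrow> 'a set \<Rightarrow> 'a set" where
  "gprod M m A B = {m a b | a b. a \<in> A \<and> b \<in> B \<and> gdom M m a = gran M m b}"

definition ginv :: "'a set \<Rightarrow> ('a \<Rightarrow> 'a \<Rightarrow> 'a) \<Rightarrow> 'a set \<Rightarrow> 'a set" where
  "ginv M m A = invm M m ` A"

text \<open>Identities of the groupoid = idempotents of S.\<close>
definition local_bisection :: "'a set \<Rightarrow> ('a \<Rightarrow> 'a \<Rightarrow> 'a) \<Rightarrow> 'a set \<Rightarrow> bool" where
  "local_bisection M m A \<longleftrightarrow> A \<subseteq> M
     \<and> gprod M m A (ginv M m A) \<subseteq> idems M m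
     \<and> gprod M m (ginv M m A) A \<subseteq> idems M m"

text \<open>K(G): carrier, multiplication, unit (all identities) and zero (empty set).\<close>
definition KG :: "'a set \<Rightarrow> ('a \<Rightarrow> 'a \<Rightarrow> 'a) \<Rightarrow> 'a set set" where
  "KG M m = {A. local_bisection M m A}"

definition down :: "'a set \<Rightarrow> ('a \<Rightarrow> 'a \<Rightarrow> 'a) \<Rightarrow> 'a \<Rightarrow> 'a set" where
  "down M m a = {x \<in> M. nleq M m x a}"

end

theory Submission
  imports Defs
begin

text \<open>For an idempotent \<open>e\<close> of \<open>S\<close> let \<open>\<epsilon> e\<close> be the relative complement in \<open>\<alpha> e\<close> of
  the join of all \<open>\<alpha> f\<close> with \<open>f < e\<close>. As \<open>S\<close> is finite, induction on \<open>e\<close> shows that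
  \<open>\<alpha> e\<close> is the join of the pairwise orthogonal \<open>\<epsilon> f\<close>, \<open>f \<le> e\<close>, and that conjugation by
  \<open>\<alpha> x\<close> carries \<open>\<epsilon> (d x)\<close> to \<open>\<epsilon> (r x)\<close>.

  Uniqueness: a local bisection is the disjoint union of its singletons, \<open>{x} = x\<down> {d x}\<close>,
  and for an idempotent \<open>e\<close> the singleton \<open>{e}\<close> is the complement of \<open>e\<down> - {e}\<close> in \<open>e\<down>\<close>.
  Hence every extension \<open>\<gamma>\<close> of \<open>\<alpha>\<close> satisfies \<open>\<gamma> {e} = \<epsilon> e\<close>, \<open>\<gamma> {x} = \<alpha> x \<epsilon> (d x)\<close> and
  so \<open>\<gamma> A\<close> is the join of the \<open>\<alpha> x \<epsilon> (d x)\<close>, \<open>x \<in> A\<close>.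

  Existence: this formula defines a morphism. The summands are pairwise orthogonal because
  the elements of a local bisection have distinct domains and distinct ranges, and the
  conjugation identity \<open>\<alpha> x \<epsilon> (d x) = \<epsilon> (r x) \<alpha> x\<close> shows that the product of two summands
  is the summand of the groupoid product when this is defined, and zero otherwise.\<close>

section \<open>Inverse monoids\<close>

locale inv_monoid =
  fixes M :: "'a set" and mult :: "'a \<Rightarrow> 'a \<Rightarrow> 'a" (infixl "\<cdot>" 70) and one :: 'a
  assumes inverse_monoid: "inverse_monoid M mult one"
begin

lemma one_closed [simp]: "one \<in> M"
  and mult_closed [simp]: "x \<in> M \<Longrightarrow> y \<in> M \<Longrightarrow> x \<cdot> y \<in> M"
  and mult_assoc [simp]: "x \<in> M \<Longrightarrow> y \<in> M \<Longrightarrow> z \<in> M \<Longrightarrow> x \<cdot> y \<cdot> z = x \<cdot> (y \<cdot> z)"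
  and one_mult [simp]: "x \<in> M \<Longrightarrow> one \<cdot> x = x"
  and mult_one [simp]: "x \<in> M \<Longrightarrow> x \<cdot> one = x"
  and inverse_unique: "x \<in> M \<Longrightarrow> \<exists>!y. y \<in> M \<and> x = x \<cdot> y \<cdot> x \<and> y = y \<cdot> x \<cdot> y"
  using inverse_monoid unfolding inverse_monoid_def by simp_all

abbreviation iv :: "'a \<Rightarrow> 'a" where "iv x \<equiv> invm M mult x"

lemma inv_spec: "x \<in> M \<Longrightarrow> iv x \<in> M \<and> x = x \<cdot> iv x \<cdot> x \<and> iv x = iv x \<cdot> x \<cdot> iv x"
  unfolding invm_def by (rule theI') (rule inverse_unique)

lemma inv_closed [simp]: "x \<in> M \<Longrightarrow> iv x \<in> M"
  using inv_spec by blast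

lemma mult_inv_mult [simp]: "x \<in> M \<Longrightarrow> x \<cdot> (iv x \<cdot> x) = x"
  using inv_spec by (metis mult_assoc inv_closed)

lemma inv_mult_inv [simp]: "x \<in> M \<Longrightarrow> iv x \<cdot> (x \<cdot> iv x) = iv x"
  using inv_spec by (metis mult_assoc inv_closed)

lemma inv_eqI:
  assumes "x \<in> M" "y \<in> M" "x \<cdot> (y \<cdot> x) = x" "y \<cdot> (x \<cdot> y) = y"
  shows "iv x = y"
proof -
  have "y \<in> M \<and> x = x \<cdot> y \<cdot> x \<and> y = y \<cdot> x \<cdot> y" using assms by simp
  then show ?thesis using inverse_unique[OF assms(1)] inv_spec[OF assms(1)] by blast
qed

lemma inv_inv [simp]: "x \<in> M \<Longrightarrow> iv (iv x) = x"
  by (rule inv_eqI) auto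

abbreviation E :: "'a set" where "E \<equiv> idems M mult"

lemma idems_iff: "e \<in> E \<longleftrightarrow> e \<in> M \<and> e \<cdot> e = e"
  by (simp add: idems_def)

lemma idems_closed: "e \<in> E \<Longrightarrow> e \<in> M"
  and idems_mult_self: "e \<in> E \<Longrightarrow> e \<cdot> e = e"
  by (simp_all add: idems_iff)

lemma one_idems [simp]: "one \<in> E"
  by (simp add: idems_iff)

lemma inv_idems: "e \<in> E \<Longrightarrow> iv e = e"
  by (rule inv_eqI) (auto simp: idems_iff simp flip: mult_assoc)

text \<open>The classical argument: \<open>f (e f)\<inverse> e\<close> is an idempotent inverse of \<open>e f\<close>,
  so by uniqueness of inverses it equals \<open>e f\<close>.\<close>
lemma idems_mult_closed:
  assumes e: "e \<in> E" and f: "f \<in> E"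
  shows "e \<cdot> f \<in> E"
proof -
  have eM: "e \<in> M" and fM: "f \<in> M" and ee: "e \<cdot> e = e" and ff: "f \<cdot> f = f"
    using e f by (auto simp: idems_iff)
  define y where "y = iv (e \<cdot> f)"
  define x where "x = f \<cdot> y \<cdot> e"
  have yM: "y \<in> M" and xM: "x \<in> M" using eM fM by (simp_all add: x_def y_def)
  have efy: "e \<cdot> f \<cdot> y \<cdot> (e \<cdot> f) = e \<cdot> f" and yef: "y \<cdot> (e \<cdot> f) \<cdot> y = y"
    using inv_spec[of "e \<cdot> f"] eM fM by (auto simp: y_def)
  have e_absorb: "e \<cdot> (e \<cdot> z) = e \<cdot> z" and f_absorb: "f \<cdot> (f \<cdot> z) = f \<cdot> z" if "z \<in> M" for z
    using that eM fM ee ff by (metis mult_assoc)+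
  have "x \<cdot> x = f \<cdot> (y \<cdot> (e \<cdot> f) \<cdot> y) \<cdot> e"
    using eM fM yM ee ff by (simp add: x_def)
  then have xx: "x \<cdot> x = x" using yef by (simp add: x_def)
  have "e \<cdot> f \<cdot> x \<cdot> (e \<cdot> f) = e \<cdot> f \<cdot> y \<cdot> (e \<cdot> f)"
    using eM fM yM e_absorb f_absorb by (simp add: x_def)
  then have ef_x_ef: "e \<cdot> f \<cdot> (x \<cdot> (e \<cdot> f)) = e \<cdot> f" using efy eM fM xM by simp
  have "x \<cdot> (e \<cdot> f) \<cdot> x = f \<cdot> (y \<cdot> (e \<cdot> f) \<cdot> y) \<cdot> e"
    using eM fM yM e_absorb f_absorb by (simp add: x_def)
  then have x_ef_x: "x \<cdot> (e \<cdot> f \<cdot> x) = x" using yef eM fM xM by (simp add: x_def)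
  have "iv x = e \<cdot> f" using xM eM fM ef_x_ef x_ef_x by (intro inv_eqI) auto
  moreover have "iv x = x" using xx xM by (intro inv_idems) (simp add: idems_iff)
  ultimately show ?thesis using xx xM by (simp add: idems_iff)
qed

lemma idems_commute:
  assumes e: "e \<in> E" and f: "f \<in> E"
  shows "e \<cdot> f = f \<cdot> e"
proof -
  have eM: "e \<in> M" and fM: "f \<in> M" using e f idems_closed by auto
  have ef: "e \<cdot> f \<in> E" and fe: "f \<cdot> e \<in> E" using idems_mult_closed e f by auto
  have "(e \<cdot> f) \<cdot> ((f \<cdot> e) \<cdot> (e \<cdot> f)) = (e \<cdot> (f \<cdot> f)) \<cdot> ((e \<cdot> e) \<cdot> f)"
    using eM fM by simp
  then have ef_fe_ef: "(e \<cdot> f) \<cdot> ((f \<cdot> e) \<cdot> (e \<cdot> f)) = e \<cdot> f"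
    using e f ef by (simp add: idems_mult_self)
  have "(f \<cdot> e) \<cdot> ((e \<cdot> f) \<cdot> (f \<cdot> e)) = (f \<cdot> (e \<cdot> e)) \<cdot> ((f \<cdot> f) \<cdot> e)"
    using eM fM by simp
  then have fe_ef_fe: "(f \<cdot> e) \<cdot> ((e \<cdot> f) \<cdot> (f \<cdot> e)) = f \<cdot> e"
    using e f fe by (simp add: idems_mult_self)
  have "iv (e \<cdot> f) = f \<cdot> e" using eM fM ef_fe_ef fe_ef_fe by (intro inv_eqI) auto
  then show ?thesis using inv_idems[OF ef] by simp
qed

lemma idems_absorb_left [simp]: "e \<in> E \<Longrightarrow> z \<in> M \<Longrightarrow> e \<cdot> (e \<cdot> z) = e \<cdot> z"
  by (metis idems_closed idems_mult_self mult_assoc)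

lemma idems_left_commute: "e \<in> E \<Longrightarrow> f \<in> E \<Longrightarrow> z \<in> M \<Longrightarrow> e \<cdot> (f \<cdot> z) = f \<cdot> (e \<cdot> z)"
  by (metis idems_closed idems_commute mult_assoc)

text \<open>\<open>src\<close> and \<open>tgt\<close> are the maps \<open>d\<close> and \<open>r\<close> of the underlying groupoid.\<close>

abbreviation src :: "'a \<Rightarrow> 'a" where "src x \<equiv> iv x \<cdot> x"
abbreviation tgt :: "'a \<Rightarrow> 'a" where "tgt x \<equiv> x \<cdot> iv x"

lemma src_idems [simp]: "x \<in> M \<Longrightarrow> src x \<in> E"
  and tgt_idems [simp]: "x \<in> M \<Longrightarrow> tgt x \<in> E"
  by (simp_all add: idems_iff)

lemma src_of_idems: "e \<in> E \<Longrightarrow> src e = e"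
  and tgt_of_idems: "e \<in> E \<Longrightarrow> tgt e = e"
  by (simp_all add: inv_idems idems_mult_self)

lemma mult_inv_mult_left [simp]: "x \<in> M \<Longrightarrow> z \<in> M \<Longrightarrow> x \<cdot> (iv x \<cdot> (x \<cdot> z)) = x \<cdot> z"
  by (metis inv_closed mult_assoc mult_closed mult_inv_mult)

lemma inv_mult_inv_left [simp]: "x \<in> M \<Longrightarrow> z \<in> M \<Longrightarrow> iv x \<cdot> (x \<cdot> (iv x \<cdot> z)) = iv x \<cdot> z"
  by (metis inv_closed mult_assoc mult_closed inv_mult_inv)

lemma inv_mult: assumes x: "x \<in> M" and y: "y \<in> M" shows "iv (x \<cdot> y) = iv y \<cdot> iv x"
proof (rule inv_eqI)
  have swap: "iv x \<cdot> (x \<cdot> (y \<cdot> (iv y \<cdot> z))) = y \<cdot> (iv y \<cdot> (iv x \<cdot> (x \<cdot> z)))" if "z \<in> M" for z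
    using idems_left_commute[of "src x" "tgt y" z] x y that by simp
  have "x \<cdot> y \<cdot> (iv y \<cdot> iv x \<cdot> (x \<cdot> y)) = x \<cdot> (iv x \<cdot> (x \<cdot> (y \<cdot> (iv y \<cdot> y))))"
    using swap[of y] x y by simp
  then show "x \<cdot> y \<cdot> (iv y \<cdot> iv x \<cdot> (x \<cdot> y)) = x \<cdot> y" using x y by simp
  have "iv y \<cdot> iv x \<cdot> (x \<cdot> y \<cdot> (iv y \<cdot> iv x)) = iv y \<cdot> (y \<cdot> (iv y \<cdot> (iv x \<cdot> (x \<cdot> iv x))))"
    using swap[of "iv x"] x y by simp
  then show "iv y \<cdot> iv x \<cdot> (x \<cdot> y \<cdot> (iv y \<cdot> iv x)) = iv y \<cdot> iv x" using x y by simp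
qed (use x y in auto)

lemma conj_idems: assumes e: "e \<in> E" and x: "x \<in> M" shows "x \<cdot> e \<cdot> iv x \<in> E"
proof -
  have eM: "e \<in> M" using e idems_closed by auto
  have "e \<cdot> (iv x \<cdot> (x \<cdot> (e \<cdot> iv x))) = iv x \<cdot> (x \<cdot> (e \<cdot> iv x))"
    using idems_left_commute[of e "src x" "e \<cdot> iv x"] e eM x by simp
  then show ?thesis using eM x by (simp add: idems_iff)
qed

abbreviation le :: "'a \<Rightarrow> 'a \<Rightarrow> bool" (infix "\<preceq>" 50) where "s \<preceq> t \<equiv> nleq M mult s t"

lemma le_iff_src: "s \<preceq> t \<longleftrightarrow> s = t \<cdot> src s"
  by (simp add: nleq_def)

lemma le_iff_idems_right: assumes s: "s \<in> M" and t: "t \<in> M" shows "s \<preceq> t \<longleftrightarrow> (\<exists>e\<in>E. s = t \<cdot> e)"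
proof
  assume "s \<preceq> t" then show "\<exists>e\<in>E. s = t \<cdot> e"
    using s by (auto simp: le_iff_src)
next
  assume "\<exists>e\<in>E. s = t \<cdot> e"
  then obtain e where e: "e \<in> E" "s = t \<cdot> e" by blast
  have eM: "e \<in> M" using e idems_closed by auto
  have "src s = e \<cdot> src t \<cdot> e" using e s t eM by (simp add: inv_mult inv_idems)
  also have "\<dots> = src t \<cdot> e"
    using idems_left_commute[of e "src t" e] idems_commute[of e "src t"] e t eM
    by (simp add: idems_mult_self)
  finally show "s \<preceq> t" using e t eM by (simp add: le_iff_src)
qed

lemma le_iff_idems_left: assumes s: "s \<in> M" and t: "t \<in> M" shows "s \<preceq> t \<longleftrightarrow> (\<exists>f\<in>E. s = f \<cdot> t)"
proof
  assume "s \<preceq> t"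
  then obtain e where e: "e \<in> E" "s = t \<cdot> e" using le_iff_idems_right s t by blast
  have "t \<cdot> e = (t \<cdot> e \<cdot> iv t) \<cdot> t"
    using idems_commute[of e "src t"] e t idems_closed[of e] by simp
  then show "\<exists>f\<in>E. s = f \<cdot> t" using e conj_idems t by metis
next
  assume "\<exists>f\<in>E. s = f \<cdot> t"
  then obtain f where f: "f \<in> E" "s = f \<cdot> t" by blast
  have fM: "f \<in> M" using f idems_closed by auto
  have "f \<cdot> t = t \<cdot> (iv t \<cdot> f \<cdot> t)"
    using idems_left_commute[of f "tgt t" t] f t fM by simp
  moreover have "iv t \<cdot> f \<cdot> t \<in> E" using conj_idems[of f "iv t"] f t by simp
  ultimately show "s \<preceq> t" using le_iff_idems_right s t f by auto
qed

lemma le_tgt_mult: assumes "s \<preceq> t" "s \<in> M" "t \<in> M" shows "s = tgt s \<cdot> t"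
proof -
  obtain f where f: "f \<in> E" "s = f \<cdot> t" using le_iff_idems_left assms by blast
  have fM: "f \<in> M" using f idems_closed by auto
  have "tgt s = f \<cdot> tgt t \<cdot> f" using f assms fM by (simp add: inv_mult inv_idems)
  also have "\<dots> = f \<cdot> tgt t"
    using idems_left_commute[of f "tgt t" f] idems_commute[of f "tgt t"] f assms fM
    by (simp add: idems_mult_self)
  finally show ?thesis using f assms fM by simp
qed

lemma le_refl [simp]: "s \<in> M \<Longrightarrow> s \<preceq> s"
  by (simp add: le_iff_src)

lemma le_trans: assumes "r \<preceq> s" "s \<preceq> t" "r \<in> M" "s \<in> M" "t \<in> M" shows "r \<preceq> t"
proof -
  obtain e where e: "e \<in> E" "r = s \<cdot> e" using le_iff_idems_right assms by blast
  obtain f where f: "f \<in> E" "s = t \<cdot> f" using le_iff_idems_right assms by blast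
  have "r = t \<cdot> (f \<cdot> e)" using e f assms by (simp add: idems_closed)
  then show ?thesis using le_iff_idems_right assms idems_mult_closed e f by blast
qed

lemma le_antisym: assumes "s \<preceq> t" "t \<preceq> s" "s \<in> M" "t \<in> M" shows "s = t"
proof -
  obtain e where e: "e \<in> E" "s = t \<cdot> e" using le_iff_idems_right assms by blast
  obtain f where f: "f \<in> E" "t = s \<cdot> f" using le_iff_idems_right assms by blast
  have M: "e \<in> M" "f \<in> M" using e f idems_closed by auto
  have sfe: "s = s \<cdot> (f \<cdot> e)" using e f M assms by simp
  have "s \<cdot> f = s \<cdot> (f \<cdot> e) \<cdot> f" using sfe by (rule arg_cong)
  also have "\<dots> = s \<cdot> (f \<cdot> (e \<cdot> f))" using M assms by simp
  also have "\<dots> = s \<cdot> (f \<cdot> e)" using idems_commute[OF e(1) f(1)] f M by simp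
  also have "\<dots> = s" using sfe by simp
  finally show ?thesis using f by simp
qed

lemma le_mult_left_mono: assumes "s \<preceq> t" "s \<in> M" "t \<in> M" "z \<in> M" shows "z \<cdot> s \<preceq> z \<cdot> t"
proof -
  obtain e where e: "e \<in> E" "s = t \<cdot> e" using le_iff_idems_right assms by blast
  then have "z \<cdot> s = (z \<cdot> t) \<cdot> e" using assms idems_closed by simp
  moreover have "z \<cdot> s \<in> M" "z \<cdot> t \<in> M" using assms by auto
  ultimately show ?thesis using le_iff_idems_right e(1) by blast
qed

lemma le_mult_right_mono: assumes "s \<preceq> t" "s \<in> M" "t \<in> M" "z \<in> M" shows "s \<cdot> z \<preceq> t \<cdot> z"
proof -
  obtain f where f: "f \<in> E" "s = f \<cdot> t" using le_iff_idems_left assms by blast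
  then have "s \<cdot> z = f \<cdot> (t \<cdot> z)" using assms idems_closed by simp
  moreover have "s \<cdot> z \<in> M" "t \<cdot> z \<in> M" using assms by auto
  ultimately show ?thesis using le_iff_idems_left f(1) by blast
qed

lemma le_inv_mono: assumes "s \<preceq> t" "s \<in> M" "t \<in> M" shows "iv s \<preceq> iv t"
proof -
  obtain e where e: "e \<in> E" "s = t \<cdot> e" using le_iff_idems_right assms by blast
  then have "iv s = e \<cdot> iv t" using assms by (simp add: inv_mult inv_idems idems_closed)
  moreover have "iv s \<in> M" "iv t \<in> M" using assms by auto
  ultimately show ?thesis using le_iff_idems_left e(1) by blast
qed

lemma le_src_mono: assumes "s \<preceq> t" "s \<in> M" "t \<in> M" shows "src s \<preceq> src t"
proof -
  have "src s \<preceq> iv t \<cdot> s" using le_mult_right_mono[OF le_inv_mono[OF assms]] assms by simp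
  moreover have "iv t \<cdot> s \<preceq> src t" using le_mult_left_mono[OF assms] assms by simp
  ultimately show ?thesis using le_trans assms by simp
qed

lemma le_idems_iff: assumes "e \<in> E" "f \<in> E" shows "e \<preceq> f \<longleftrightarrow> e = f \<cdot> e"
  using assms by (simp add: le_iff_src inv_idems idems_mult_self)

lemma le_idems_iff': assumes "e \<in> E" "f \<in> E" shows "e \<preceq> f \<longleftrightarrow> e = e \<cdot> f"
  using le_idems_iff[OF assms] idems_commute[OF assms] by simp

lemma le_idems_imp_idems: assumes "s \<preceq> f" "f \<in> E" "s \<in> M" shows "s \<in> E"
proof -
  obtain e where "e \<in> E" "s = f \<cdot> e" using le_iff_idems_right assms idems_closed by blast
  then show ?thesis using idems_mult_closed assms by simp
qed

lemma idems_le_one: "e \<in> E \<Longrightarrow> e \<preceq> one"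
  using le_iff_idems_right[of e one] idems_closed by force

lemma idems_mult_le_left: assumes "e \<in> E" "f \<in> E" shows "e \<cdot> f \<preceq> e"
  using le_iff_idems_right[of "e \<cdot> f" e] assms idems_closed by force

lemma conj_le_src:
  assumes x: "x \<in> M" and f: "f \<in> E" "f \<preceq> src x"
  shows "x \<cdot> f \<cdot> iv x \<in> E" "x \<cdot> f \<cdot> iv x \<preceq> tgt x" "iv x \<cdot> (x \<cdot> f \<cdot> iv x) \<cdot> x = f"
proof -
  have fM: "f \<in> M" using f idems_closed by auto
  have "f = src x \<cdot> f" "f = f \<cdot> src x"
    using f x le_idems_iff[of f "src x"] le_idems_iff'[of f "src x"] by auto
  then have ff: "iv x \<cdot> (x \<cdot> f) = f" "f \<cdot> (iv x \<cdot> x) = f" using x fM by simp_all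
  show conj: "x \<cdot> f \<cdot> iv x \<in> E" using conj_idems f x by simp
  show "x \<cdot> f \<cdot> iv x \<preceq> tgt x" using conj x fM le_idems_iff by simp
  show "iv x \<cdot> (x \<cdot> f \<cdot> iv x) \<cdot> x = f" using ff x fM by (simp flip: mult_assoc)
qed

lemma mem_down_iff: "x \<in> down M mult a \<longleftrightarrow> x \<in> M \<and> x \<preceq> a"
  by (simp add: down_def)

lemma down_idems_subset: "e \<in> E \<Longrightarrow> down M mult e \<subseteq> E"
  using le_idems_imp_idems by (auto simp: mem_down_iff)

lemma down_one: "down M mult one = E"
  using down_idems_subset[OF one_idems] idems_le_one idems_closed by (auto simp: mem_down_iff)

lemma down_subset_down:
  assumes e: "e \<in> E" and f: "f \<in> down M mult e - {e}"
  shows "down M mult f \<subseteq> down M mult e - {e}"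
  using e f le_trans le_antisym idems_closed by (auto simp: mem_down_iff)

lemma down_tgt_conj:
  assumes x: "x \<in> M"
  shows "down M mult (tgt x) - {tgt x} = (\<lambda>f. x \<cdot> f \<cdot> iv x) ` (down M mult (src x) - {src x})"
proof (intro set_eqI iffI)
  fix g assume g: "g \<in> down M mult (tgt x) - {tgt x}"
  then have gE: "g \<in> E" "g \<preceq> src (iv x)"
    using x down_idems_subset[of "tgt x"] by (auto simp: mem_down_iff)
  note c = conj_le_src[of "iv x", OF _ gE, simplified]
  have "iv x \<cdot> g \<cdot> x \<noteq> src x"
  proof
    assume "iv x \<cdot> g \<cdot> x = src x"
    then have "x \<cdot> (iv x \<cdot> g \<cdot> x) \<cdot> iv x = tgt x" using x by simp
    then show False using c(3) g x by simp
  qed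
  then have "iv x \<cdot> g \<cdot> x \<in> down M mult (src x) - {src x}"
    using c x idems_closed by (auto simp: mem_down_iff)
  moreover have "g = x \<cdot> (iv x \<cdot> g \<cdot> x) \<cdot> iv x" using c(3) x by simp
  ultimately show "g \<in> (\<lambda>f. x \<cdot> f \<cdot> iv x) ` (down M mult (src x) - {src x})" by blast
next
  fix g assume "g \<in> (\<lambda>f. x \<cdot> f \<cdot> iv x) ` (down M mult (src x) - {src x})"
  then obtain f where f: "f \<in> down M mult (src x) - {src x}" "g = x \<cdot> f \<cdot> iv x" by blast
  then have fE: "f \<in> E" "f \<preceq> src x"
    using x down_idems_subset[of "src x"] by (auto simp: mem_down_iff)
  note c = conj_le_src[OF x fE]
  have "g \<noteq> tgt x"
  proof
    assume "g = tgt x"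
    then have "f = iv x \<cdot> tgt x \<cdot> x" using c(3) f(2) by simp
    then show False using f x by simp
  qed
  then show "g \<in> down M mult (tgt x) - {tgt x}"
    using c f x idems_closed by (auto simp: mem_down_iff)
qed

lemma idems_down_induct [consumes 2, case_names less]:
  assumes "finite M" "e \<in> E"
    and less: "\<And>e. e \<in> E \<Longrightarrow> (\<And>f. f \<in> down M mult e - {e} \<Longrightarrow> P f) \<Longrightarrow> P e"
  shows "P e"
  using assms(2)
proof (induction e rule: measure_induct_rule[of "\<lambda>e. card (down M mult e)"])
  case (less e)
  show ?case
  proof (rule assms(3)[OF less.prems])
    fix f assume f: "f \<in> down M mult e - {e}"
    have "down M mult f \<subset> down M mult e"
      using down_subset_down[OF less.prems f] idems_closed[OF less.prems]
      by (auto simp: mem_down_iff)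
    then have "card (down M mult f) < card (down M mult e)"
      using assms(1) by (intro psubset_card_mono) (auto simp: down_def)
    moreover have "f \<in> E" using f down_idems_subset less.prems by auto
    ultimately show "P f" using less.IH by blast
  qed
qed

lemma is_join_closed: "is_join M mult X j \<Longrightarrow> j \<in> M"
  by (simp add: is_join_def)

lemma le_join_iff:
  assumes j: "is_join M mult X j" and X: "X \<subseteq> M" and y: "y \<in> M"
  shows "j \<preceq> y \<longleftrightarrow> (\<forall>x\<in>X. x \<preceq> y)"
  using j X y le_trans[of _ j y] unfolding is_join_def by blast

lemma is_join_cong_upper_bounds:
  assumes "\<And>y. y \<in> M \<Longrightarrow> (\<forall>x\<in>X. x \<preceq> y) \<longleftrightarrow> (\<forall>x\<in>Y. x \<preceq> y)"
  shows "is_join M mult X k \<longleftrightarrow> is_join M mult Y k"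
  using assms unfolding is_join_def by blast

lemma is_join_unique: assumes "is_join M mult X j" "is_join M mult X j'" shows "j = j'"
  using assms le_antisym unfolding is_join_def by blast

lemma is_join_UN_iff:
  assumes "\<And>i. i \<in> I \<Longrightarrow> is_join M mult (X i) (j i)" and "\<And>i. i \<in> I \<Longrightarrow> X i \<subseteq> M"
  shows "is_join M mult (\<Union>i\<in>I. X i) k \<longleftrightarrow> is_join M mult (j ` I) k"
proof (rule is_join_cong_upper_bounds)
  fix y assume y: "y \<in> M"
  have "(\<forall>x\<in>X i. x \<preceq> y) \<longleftrightarrow> j i \<preceq> y" if "i \<in> I" for i
    using le_join_iff[OF assms(1)[OF that] assms(2)[OF that] y] by simp
  then show "(\<forall>x\<in>(\<Union>i\<in>I. X i). x \<preceq> y) \<longleftrightarrow> (\<forall>x\<in>j ` I. x \<preceq> y)" by auto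
qed

lemma is_join_Un_iff:
  assumes "is_join M mult X a" "is_join M mult Y b" "X \<subseteq> M" "Y \<subseteq> M"
  shows "is_join M mult (X \<union> Y) k \<longleftrightarrow> is_join M mult {a, b} k"
proof (rule is_join_cong_upper_bounds)
  fix y assume "y \<in> M"
  then show "(\<forall>x\<in>X \<union> Y. x \<preceq> y) \<longleftrightarrow> (\<forall>x\<in>{a, b}. x \<preceq> y)"
    using le_join_iff[OF assms(1,3)] le_join_iff[OF assms(2,4)] by auto
qed

definition pairwise_compatible :: "'a set \<Rightarrow> bool" where
  "pairwise_compatible X \<longleftrightarrow> (\<forall>a\<in>X. \<forall>b\<in>X. compatible M mult a b)"

lemma compatible_refl: "x \<in> M \<Longrightarrow> compatible M mult x x"
  unfolding compatible_def by simp

lemma pairwise_compatible_idems: "X \<subseteq> E \<Longrightarrow> pairwise_compatible X"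
  unfolding pairwise_compatible_def compatible_def
  by (auto simp: inv_idems idems_mult_closed subsetD)

lemma pairwise_compatible_mult_idems:
  assumes X: "X \<subseteq> E" and s: "s \<in> M"
  shows "pairwise_compatible ((\<lambda>y. s \<cdot> y) ` X)"
  unfolding pairwise_compatible_def compatible_def
proof (intro ballI conjI)
  fix a b assume "a \<in> (\<lambda>y. s \<cdot> y) ` X" "b \<in> (\<lambda>y. s \<cdot> y) ` X"
  then obtain p q where pq: "a = s \<cdot> p" "b = s \<cdot> q" "p \<in> E" "q \<in> E" using X by auto
  have M: "p \<in> M" "q \<in> M" using pq idems_closed by auto
  have "iv a \<cdot> b = p \<cdot> (src s \<cdot> q)" using pq M s by (simp add: inv_mult inv_idems)
  then show "iv a \<cdot> b \<in> E" using idems_mult_closed pq s by simp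
  have "a \<cdot> iv b = s \<cdot> (p \<cdot> q) \<cdot> iv s" using pq M s by (simp add: inv_mult inv_idems)
  then show "a \<cdot> iv b \<in> E" using conj_idems idems_mult_closed pq s by simp
qed

lemma is_join_idems: assumes "is_join M mult X j" "X \<subseteq> E" shows "j \<in> E"
proof -
  have "j \<preceq> one" using assms one_closed idems_le_one unfolding is_join_def by blast
  then show ?thesis using le_idems_imp_idems assms unfolding is_join_def by auto
qed

end

section \<open>Boolean inverse monoids\<close>

locale bool_inv_monoid = inv_monoid M mult one for M and mult (infixl "\<cdot>" 70) and one +
  fixes zero
  assumes boolean_inverse_monoid: "boolean_inverse_monoid M mult one zero"
begin

lemma zero_closed [simp]: "zero \<in> M"
  and zero_mult [simp]: "x \<in> M \<Longrightarrow> zero \<cdot> x = zero"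
  and mult_zero [simp]: "x \<in> M \<Longrightarrow> x \<cdot> zero = zero"
  using boolean_inverse_monoid unfolding boolean_inverse_monoid_def by blast+

lemma zero_idems [simp]: "zero \<in> E"
  by (simp add: idems_iff)

lemma zero_le: "x \<in> M \<Longrightarrow> zero \<preceq> x"
  by (simp add: le_iff_src inv_idems)

lemma compatible_if_orthogonal: "iv a \<cdot> b = zero \<Longrightarrow> a \<cdot> iv b = zero \<Longrightarrow> compatible M mult a b"
  unfolding compatible_def by simp

lemma is_join_exists: "finite X \<Longrightarrow> X \<subseteq> M \<Longrightarrow> pairwise_compatible X \<Longrightarrow> \<exists>j. is_join M mult X j"
  using boolean_inverse_monoid unfolding boolean_inverse_monoid_def pairwise_compatible_def by blast

lemma is_join_The:
  assumes "finite X" "X \<subseteq> M" "pairwise_compatible X"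
  shows "is_join M mult X (THE j. is_join M mult X j)"
  using is_join_exists[OF assms] is_join_unique by (metis theI)

lemma
  assumes "finite X" "X \<subseteq> M" "pairwise_compatible X" "is_join M mult X j" "s \<in> M"
  shows is_join_mult_left: "is_join M mult ((\<lambda>x. s \<cdot> x) ` X) (s \<cdot> j)"
    and is_join_mult_right: "is_join M mult ((\<lambda>x. x \<cdot> s) ` X) (j \<cdot> s)"
proof -
  have "\<forall>X j. finite X \<and> X \<subseteq> M \<and> pairwise_compatible X \<and> is_join M mult X j
          \<longrightarrow> (\<forall>s\<in>M. is_join M mult ((\<lambda>x. s \<cdot> x) ` X) (s \<cdot> j)
                    \<and> is_join M mult ((\<lambda>x. x \<cdot> s) ` X) (j \<cdot> s))"
    using boolean_inverse_monoid unfolding boolean_inverse_monoid_def pairwise_compatible_def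
    by blast
  then show "is_join M mult ((\<lambda>x. s \<cdot> x) ` X) (s \<cdot> j)" "is_join M mult ((\<lambda>x. x \<cdot> s) ` X) (j \<cdot> s)"
    using assms by blast+
qed

lemma is_join_mult:
  assumes X: "finite X" "X \<subseteq> M" "pairwise_compatible X" "is_join M mult X a"
    and Y: "finite Y" "Y \<subseteq> M" "pairwise_compatible Y" "is_join M mult Y b"
  shows "is_join M mult {x \<cdot> y |x y. x \<in> X \<and> y \<in> Y} (a \<cdot> b)"
proof -
  have a: "a \<in> M" using X(4) by (rule is_join_closed)
  have "{x \<cdot> y |x y. x \<in> X \<and> y \<in> Y} = (\<Union>y\<in>Y. (\<lambda>x. x \<cdot> y) ` X)" by blast
  moreover have "is_join M mult (\<Union>y\<in>Y. (\<lambda>x. x \<cdot> y) ` X) (a \<cdot> b)"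
  proof (subst is_join_UN_iff)
    show "is_join M mult ((\<lambda>x. x \<cdot> y) ` X) (a \<cdot> y)" if "y \<in> Y" for y
      using is_join_mult_right[OF X] that Y(2) by auto
    show "(\<lambda>x. x \<cdot> y) ` X \<subseteq> M" if "y \<in> Y" for y
      using that X(2) Y(2) by (blast intro: mult_closed)
    show "is_join M mult ((\<lambda>y. a \<cdot> y) ` Y) (a \<cdot> b)"
      using is_join_mult_left[OF Y a] .
  qed
  ultimately show ?thesis by simp
qed

lemma is_join_empty: "is_join M mult {} zero"
  by (auto simp: is_join_def zero_le)

lemma is_join_singleton: "x \<in> M \<Longrightarrow> is_join M mult {x} x"
  by (auto simp: is_join_def)

lemma is_join_insert_zero: "is_join M mult (insert zero X) j \<longleftrightarrow> is_join M mult X j"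
  by (rule is_join_cong_upper_bounds) (auto simp: zero_le)

lemma is_join_conj:
  assumes j: "is_join M mult X j" and X: "finite X" "X \<subseteq> E" and s: "s \<in> M"
  shows "is_join M mult ((\<lambda>y. s \<cdot> y \<cdot> iv s) ` X) (s \<cdot> j \<cdot> iv s)"
proof -
  have XM: "X \<subseteq> M" using X idems_closed by auto
  have sj: "is_join M mult ((\<lambda>y. s \<cdot> y) ` X) (s \<cdot> j)"
    using is_join_mult_left[OF X(1) XM pairwise_compatible_idems[OF X(2)] j s] .
  have "is_join M mult ((\<lambda>y. y \<cdot> iv s) ` (\<lambda>y. s \<cdot> y) ` X) (s \<cdot> j \<cdot> iv s)"
    by (rule is_join_mult_right[OF _ _ pairwise_compatible_mult_idems[OF X(2) s] sj])
      (use X XM s in auto)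
  then show ?thesis by (simp add: image_image)
qed

text \<open>By distributivity, \<open>r = r (r' \<squnion> q) = r r' \<squnion> r q = r r'\<close>, and symmetrically.\<close>
lemma relative_complement_unique:
  assumes r: "r \<in> E" and r': "r' \<in> E" and q: "q \<in> E"
    and rq: "r \<cdot> q = zero" and r'q: "r' \<cdot> q = zero"
    and j: "is_join M mult {r, q} p" and j': "is_join M mult {r', q} p"
  shows "r = r'"
proof -
  have absorb: "r = r \<cdot> r'" if r: "r \<in> E" and r': "r' \<in> E" and rq: "r \<cdot> q = zero"
      and j: "is_join M mult {r, q} p" and j': "is_join M mult {r', q} p" for r r'
  proof -
    have M: "r \<in> M" "r' \<in> M" "q \<in> M" using r r' q idems_closed by auto
    have "is_join M mult ((\<lambda>x. r \<cdot> x) ` {r', q}) (r \<cdot> p)"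
      using is_join_mult_left[OF _ _ _ j'] M pairwise_compatible_idems[of "{r', q}"] r' q by auto
    then have "is_join M mult {r \<cdot> r'} (r \<cdot> p)"
      using rq is_join_insert_zero[of "{r \<cdot> r'}"] by (simp add: insert_commute)
    then have "r \<cdot> p = r \<cdot> r'" using is_join_unique is_join_singleton M by simp
    moreover have "r = r \<cdot> p"
      using j le_idems_iff' r is_join_idems[OF j] q unfolding is_join_def by auto
    ultimately show ?thesis by simp
  qed
  have "r = r \<cdot> r'" "r' = r' \<cdot> r" using absorb r r' rq r'q j j' by blast+
  then show ?thesis using idems_commute r r' by metis
qed

text \<open>\<open>idems_boolean\<close> speaks of meets and joins in the poset of idempotents; the meet is
  the product, and a join of idempotents in \<open>M\<close> is again idempotent, so it is also their join
  in that poset.\<close>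
lemma complement_exists:
  assumes q: "q \<in> E" shows "\<exists>c\<in>E. q \<cdot> c = zero \<and> is_join M mult {q, c} one"
proof -
  have boolean: "idems_boolean M mult one zero"
    using boolean_inverse_monoid unfolding boolean_inverse_monoid_def by blast
  obtain c where c: "c \<in> E" "meetE M mult q c = zero" "joinE M mult q c = one"
    using boolean q unfolding idems_boolean_def by blast
  have glb: "is_glb_E M mult q c (q \<cdot> c)"
    using q c(1) idems_mult_closed idems_mult_le_left idems_commute le_idems_iff
    unfolding is_glb_E_def by (metis idems_closed mult_assoc)
  have "meetE M mult q c = q \<cdot> c"
    unfolding meetE_def using glb le_antisym idems_closed unfolding is_glb_E_def by blast
  then have qc: "q \<cdot> c = zero" using c by simp
  obtain l where l: "is_lub_E M mult q c l"
    using boolean q c(1) unfolding idems_boolean_def by blast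
  have "joinE M mult q c = l"
    unfolding joinE_def using l le_antisym idems_closed unfolding is_lub_E_def by blast
  then have lub: "is_lub_E M mult q c one" using l c by simp
  obtain j where j: "is_join M mult {q, c} j"
    using is_join_exists[of "{q, c}"] pairwise_compatible_idems[of "{q, c}"] q c idems_closed
    by auto
  have "j \<in> E" using is_join_idems[OF j] q c by auto
  then have "one \<preceq> j" "j \<preceq> one"
    using lub j idems_le_one unfolding is_lub_E_def is_join_def by auto
  then have "j = one" using le_antisym \<open>j \<in> E\<close> idems_closed by auto
  then show ?thesis using j c qc by blast
qed

end

section \<open>The inverse monoid of local bisections\<close>

context inv_monoid
begin

lemma gdom_eq [simp]: "gdom M mult x = src x"
  and gran_eq [simp]: "gran M mult x = tgt x"
  by (simp_all add: gdom_def gran_def)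

lemma mem_gprod_iff: "z \<in> gprod M mult A B \<longleftrightarrow> (\<exists>a\<in>A. \<exists>b\<in>B. z = a \<cdot> b \<and> src a = tgt b)"
  unfolding gprod_def by auto

lemma src_mult: assumes "x \<in> M" "y \<in> M" "src x = tgt y" shows "src (x \<cdot> y) = src y"
proof -
  have "src (x \<cdot> y) = iv y \<cdot> (src x \<cdot> y)" using assms(1,2) by (simp add: inv_mult)
  also have "\<dots> = iv y \<cdot> (tgt y \<cdot> y)" by (simp only: assms(3))
  finally show ?thesis using assms(2) by simp
qed

lemma tgt_mult: assumes "x \<in> M" "y \<in> M" "src x = tgt y" shows "tgt (x \<cdot> y) = tgt x"
proof -
  have "tgt (x \<cdot> y) = x \<cdot> (tgt y \<cdot> iv x)" using assms(1,2) by (simp add: inv_mult)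
  also have "\<dots> = x \<cdot> (src x \<cdot> iv x)" by (simp only: assms(3))
  finally show ?thesis using assms(1) by simp
qed

lemma eq_if_idems_mult_inv:
  assumes x: "x \<in> M" and y: "y \<in> M" and idem: "x \<cdot> iv y \<in> E" and src: "src x = src y"
  shows "x = y"
proof -
  define g where "g = x \<cdot> iv y"
  have "g = iv g" using idem inv_idems g_def by simp
  then have g': "g = y \<cdot> iv x" using x y by (simp add: g_def inv_mult)
  have "g \<cdot> y = x" using x y by (simp add: g_def flip: src)
  moreover have "g \<cdot> x = y" using x y by (simp add: g' src)
  moreover have "g \<cdot> (g \<cdot> y) = g \<cdot> y"
    by (rule idems_absorb_left) (use idem y in \<open>simp_all add: g_def\<close>)
  ultimately show ?thesis by simp
qed

lemma eq_if_idems_inv_mult: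
  assumes "x \<in> M" "y \<in> M" "iv x \<cdot> y \<in> E" "tgt x = tgt y"
  shows "x = y"
  using eq_if_idems_mult_inv[of "iv x" "iv y"] assms by (metis inv_closed inv_inv)

lemma gprod_ginv_right:
  "B \<subseteq> M \<Longrightarrow> gprod M mult A (ginv M mult B) = {a \<cdot> iv b |a b. a \<in> A \<and> b \<in> B \<and> src a = src b}"
  unfolding gprod_def ginv_def by (auto simp: subset_iff) (blast, metis image_eqI inv_inv)

lemma gprod_ginv_left:
  "A \<subseteq> M \<Longrightarrow> gprod M mult (ginv M mult A) B = {iv a \<cdot> b |a b. a \<in> A \<and> b \<in> B \<and> tgt a = tgt b}"
  unfolding gprod_def ginv_def by (auto simp: subset_iff) (blast, metis image_eqI inv_inv)

lemma gprod_ginv_right_idems_iff: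
  assumes A: "A \<subseteq> M" and B: "B \<subseteq> M"
  shows "gprod M mult A (ginv M mult B) \<subseteq> E \<longleftrightarrow> (\<forall>a\<in>A. \<forall>b\<in>B. src a = src b \<longrightarrow> a = b)"
  using A B eq_if_idems_mult_inv by (auto simp: gprod_ginv_right subset_iff) blast

lemma gprod_ginv_left_idems_iff:
  assumes A: "A \<subseteq> M" and B: "B \<subseteq> M"
  shows "gprod M mult (ginv M mult A) B \<subseteq> E \<longleftrightarrow> (\<forall>a\<in>A. \<forall>b\<in>B. tgt a = tgt b \<longrightarrow> a = b)"
  using A B eq_if_idems_inv_mult by (auto simp: gprod_ginv_left subset_iff) blast

lemma KG_iff: "A \<in> KG M mult \<longleftrightarrow> A \<subseteq> M \<and> inj_on src A \<and> inj_on tgt A"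
proof -
  have "A \<in> KG M mult \<longleftrightarrow>
      A \<subseteq> M \<and> gprod M mult A (ginv M mult A) \<subseteq> E \<and> gprod M mult (ginv M mult A) A \<subseteq> E"
    unfolding KG_def local_bisection_def by simp
  then show ?thesis
    using gprod_ginv_right_idems_iff[of A A] gprod_ginv_left_idems_iff[of A A]
    unfolding inj_on_def by blast
qed

lemma KG_closed: "A \<in> KG M mult \<Longrightarrow> x \<in> A \<Longrightarrow> x \<in> M"
  using KG_iff by blast

lemma KG_src_inj: "A \<in> KG M mult \<Longrightarrow> x \<in> A \<Longrightarrow> y \<in> A \<Longrightarrow> src x = src y \<Longrightarrow> x = y"
  and KG_tgt_inj: "A \<in> KG M mult \<Longrightarrow> x \<in> A \<Longrightarrow> y \<in> A \<Longrightarrow> tgt x = tgt y \<Longrightarrow> x = y"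
  unfolding KG_iff inj_on_def by blast+

lemma KG_subset: "A \<in> KG M mult \<Longrightarrow> B \<subseteq> A \<Longrightarrow> B \<in> KG M mult"
  unfolding KG_iff by (meson inj_on_subset subset_trans)

lemma idems_subset_KG: "X \<subseteq> E \<Longrightarrow> X \<in> KG M mult"
  unfolding KG_iff inj_on_def by (auto simp: subset_iff inv_idems idems_iff)

lemma singleton_KG: "x \<in> M \<Longrightarrow> {x} \<in> KG M mult"
  and empty_KG: "{} \<in> KG M mult"
  by (simp_all add: KG_iff)

lemma down_KG: assumes a: "a \<in> M" shows "down M mult a \<in> KG M mult"
proof -
  have "x = a \<cdot> src x" "x = tgt x \<cdot> a" if "x \<in> down M mult a" for x
    using that le_tgt_mult[of x a] a unfolding down_def le_iff_src by auto
  then show ?thesis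
    unfolding KG_iff inj_on_def down_def by (metis (no_types, lifting) mem_Collect_eq subsetI)
qed

lemma gprod_KG: assumes A: "A \<in> KG M mult" and B: "B \<in> KG M mult"
  shows "gprod M mult A B \<in> KG M mult"
  unfolding KG_iff
proof (intro conjI inj_onI subsetI)
  have M: "a \<in> M" "b \<in> M" if "a \<in> A" "b \<in> B" for a b using that A B KG_closed by auto
  show "x \<in> M" if "x \<in> gprod M mult A B" for x using that M by (auto simp: mem_gprod_iff)
  fix x y assume "x \<in> gprod M mult A B" "y \<in> gprod M mult A B"
  then obtain a b a' b' where ab: "a \<in> A" "b \<in> B" "src a = tgt b" "x = a \<cdot> b"
    and ab': "a' \<in> A" "b' \<in> B" "src a' = tgt b'" "y = a' \<cdot> b'"
    by (auto simp: mem_gprod_iff)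
  show "x = y" if "src x = src y"
  proof -
    have "src b = src b'" using that ab ab' M src_mult by metis
    then have "b = b'" using B ab ab' KG_src_inj by blast
    then have "a = a'" using A ab ab' M KG_src_inj by metis
    then show ?thesis using ab ab' \<open>b = b'\<close> by simp
  qed
  show "x = y" if "tgt x = tgt y"
  proof -
    have "tgt a = tgt a'" using that ab ab' M tgt_mult by metis
    then have "a = a'" using A ab ab' KG_tgt_inj by blast
    then have "b = b'" using B ab ab' M KG_tgt_inj by metis
    then show ?thesis using ab ab' \<open>a = a'\<close> by simp
  qed
qed

lemma ginv_KG: assumes A: "A \<in> KG M mult" shows "ginv M mult A \<in> KG M mult"
proof -
  have AM: "A \<subseteq> M" using A KG_iff by auto
  have "inj_on src (iv ` A)"
  proof (rule inj_onI)
    fix x y assume "x \<in> iv ` A" "y \<in> iv ` A" "src x = src y"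
    then obtain a b where "a \<in> A" "b \<in> A" "x = iv a" "y = iv b" "tgt a = tgt b"
      using AM by (auto simp: subset_iff)
    then show "x = y" using KG_tgt_inj[OF A] by auto
  qed
  moreover have "inj_on tgt (iv ` A)"
  proof (rule inj_onI)
    fix x y assume "x \<in> iv ` A" "y \<in> iv ` A" "tgt x = tgt y"
    then obtain a b where "a \<in> A" "b \<in> A" "x = iv a" "y = iv b" "src a = src b"
      using AM by (auto simp: subset_iff)
    then show "x = y" using KG_src_inj[OF A] by auto
  qed
  ultimately show ?thesis using AM unfolding ginv_def KG_iff by auto
qed

lemma tgt_image_ginv: "A \<subseteq> M \<Longrightarrow> tgt ` ginv M mult A = src ` A"
  unfolding ginv_def image_image by (auto simp: subset_iff intro!: image_cong)

lemma gprod_tgt_image: assumes B: "B \<subseteq> M" shows "gprod M mult (tgt ` B) B = B"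
proof (intro set_eqI iffI)
  fix z assume "z \<in> gprod M mult (tgt ` B) B"
  then obtain b' b where b: "b' \<in> B" "b \<in> B" and eq: "src (tgt b') = tgt b" and z: "z = tgt b' \<cdot> b"
    by (auto simp: mem_gprod_iff)
  have "tgt b' = tgt b" using eq src_of_idems[OF tgt_idems, of b'] b B by auto
  then have "z = tgt b \<cdot> b" unfolding z by (rule arg_cong)
  then show "z \<in> B" using b B by (auto simp: subset_iff)
next
  fix b assume b: "b \<in> B"
  then have "b = tgt b \<cdot> b" "src (tgt b) = tgt b" using B src_of_idems[OF tgt_idems, of b] by auto
  then show "b \<in> gprod M mult (tgt ` B) B" using b unfolding mem_gprod_iff by blast
qed

lemma gprod_ginv_right_KG: "A \<in> KG M mult \<Longrightarrow> gprod M mult A (ginv M mult A) = tgt ` A"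
  using KG_iff[of A] by (auto simp: gprod_ginv_right inj_on_def)

lemma gprod_ginv_left_KG: "A \<in> KG M mult \<Longrightarrow> gprod M mult (ginv M mult A) A = src ` A"
  using KG_iff[of A] by (auto simp: gprod_ginv_left inj_on_def)

lemma groupoid_inv_eqI:
  assumes y: "y \<in> M" and a: "a \<in> M" and yay: "y \<cdot> (a \<cdot> y) = y"
    and "src y = tgt a" and src_a: "src a = tgt y"
  shows "y = iv a"
proof -
  have "(a \<cdot> y) \<cdot> (a \<cdot> y) = a \<cdot> y" using y a yay by simp
  then have "a \<cdot> y = src (a \<cdot> y)" using src_of_idems[of "a \<cdot> y"] y a by (simp add: idems_iff)
  also have "\<dots> = src y" using src_mult[OF a y src_a] .
  finally have ay: "a \<cdot> y = src y" .
  have "iv a = tgt y \<cdot> iv a" using a by (simp flip: src_a)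
  also have "\<dots> = y \<cdot> iv (a \<cdot> y)" using y a by (simp add: inv_mult)
  also have "\<dots> = y" using y by (simp add: ay inv_mult)
  finally show ?thesis by simp
qed

lemma KG_mem_gprod_gprod:
  assumes X: "X \<in> KG M mult" and Z: "Z \<subseteq> M"
    and t: "t \<in> X" "t \<in> gprod M mult (gprod M mult X Z) X"
  shows "\<exists>z\<in>Z. t \<cdot> (z \<cdot> t) = t \<and> src t = tgt z \<and> src z = tgt t"
proof -
  obtain p x2 where p: "t = p \<cdot> x2" "p \<in> gprod M mult X Z" "x2 \<in> X" "src p = tgt x2"
    using t(2) unfolding mem_gprod_iff[of t] by blast
  obtain x1 z where q: "p = x1 \<cdot> z" "x1 \<in> X" "z \<in> Z" "src x1 = tgt z"
    using p(2) unfolding mem_gprod_iff[of p] by blast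
  have M: "x1 \<in> M" "x2 \<in> M" "z \<in> M" "p \<in> M" using q p X Z KG_closed t by auto
  have "src t = src x2" unfolding p(1) using src_mult M p by blast
  then have t2: "t = x2" using KG_src_inj[OF X t(1) p(3)] by simp
  have "tgt t = tgt x1" unfolding p(1) q(1) using tgt_mult M p q by metis
  then have t1: "t = x1" using KG_tgt_inj[OF X t(1) q(2)] by simp
  have "src p = src z" unfolding q(1) using src_mult M q by blast
  then have "src z = tgt t" using p(4) t2 by simp
  moreover have "t \<cdot> (z \<cdot> t) = t" using p(1) q(1) t1 t2 M by simp
  moreover have "src t = tgt z" using q(4) t1 by simp
  ultimately show ?thesis using q(3) by blast
qed

lemma invm_KG: assumes A: "A \<in> KG M mult" shows "invm (KG M mult) (gprod M mult) A = ginv M mult A"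
  unfolding invm_def
proof (rule the_equality)
  have AM: "A \<subseteq> M" using A KG_iff by auto
  have "ginv M mult A \<subseteq> M" using AM by (auto simp: ginv_def)
  then have "gprod M mult (src ` A) (ginv M mult A) = ginv M mult A"
    using gprod_tgt_image tgt_image_ginv[OF AM] by metis
  then show "ginv M mult A \<in> KG M mult \<and> A = gprod M mult (gprod M mult A (ginv M mult A)) A \<and>
    ginv M mult A = gprod M mult (gprod M mult (ginv M mult A) A) (ginv M mult A)"
    using ginv_KG[OF A] gprod_ginv_right_KG[OF A] gprod_ginv_left_KG[OF A] gprod_tgt_image[OF AM]
    by simp
next
  fix Y assume Y: "Y \<in> KG M mult \<and> A = gprod M mult (gprod M mult A Y) A
    \<and> Y = gprod M mult (gprod M mult Y A) Y"
  have M: "A \<subseteq> M" "Y \<subseteq> M" using A Y KG_iff by auto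
  show "Y = ginv M mult A"
  proof (intro set_eqI iffI)
    fix y assume y: "y \<in> Y"
    then obtain a where "a \<in> A" "y \<cdot> (a \<cdot> y) = y" "src y = tgt a" "src a = tgt y"
      using KG_mem_gprod_gprod[of Y A y] Y M by auto
    then show "y \<in> ginv M mult A" using groupoid_inv_eqI[of y a] M y unfolding ginv_def by auto
  next
    fix y assume "y \<in> ginv M mult A"
    then obtain a where a: "a \<in> A" "y = iv a" unfolding ginv_def by auto
    then obtain z where z: "z \<in> Y" "a \<cdot> (z \<cdot> a) = a" "src a = tgt z" "src z = tgt a"
      using KG_mem_gprod_gprod[of A Y a] Y A M by auto
    have zM: "z \<in> M" using z M by auto
    then have "a = iv z" using groupoid_inv_eqI[of a z] z M a by auto
    then show "y \<in> Y" using a z zM by simp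
  qed
qed

lemma gprod_src_image: assumes Y: "Y \<subseteq> M" and X: "X \<subseteq> M"
  shows "gprod M mult Y (src ` X) = {y \<in> Y. src y \<in> src ` X}"
proof (intro set_eqI iffI)
  fix z assume "z \<in> gprod M mult Y (src ` X)"
  then obtain y x where yx: "z = y \<cdot> src x" "y \<in> Y" "x \<in> X" "src y = tgt (src x)"
    unfolding mem_gprod_iff by blast
  have M: "y \<in> M" "x \<in> M" using yx X Y by auto
  then have src: "src y = src x" using yx tgt_of_idems[of "src x"] by simp
  have "z = y" using yx(1) M by (simp flip: src)
  then show "z \<in> {y \<in> Y. src y \<in> src ` X}" using yx src by auto
next
  fix z assume "z \<in> {y \<in> Y. src y \<in> src ` X}"
  then obtain x where x: "z \<in> Y" "x \<in> X" "src z = src x" by auto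
  have M: "z \<in> M" "x \<in> M" using x X Y by auto
  have "src z = tgt (src x)" using tgt_of_idems[of "src x"] M x(3) by simp
  moreover have "z = z \<cdot> src x" using M by (simp flip: x(3))
  ultimately show "z \<in> gprod M mult Y (src ` X)" unfolding mem_gprod_iff using x by blast
qed

lemma le_KG_iff_subset: assumes X: "X \<in> KG M mult" and Y: "Y \<in> KG M mult"
  shows "nleq (KG M mult) (gprod M mult) X Y \<longleftrightarrow> X \<subseteq> Y"
proof -
  have M: "X \<subseteq> M" "Y \<subseteq> M" using X Y KG_iff by auto
  have "nleq (KG M mult) (gprod M mult) X Y \<longleftrightarrow> X = {y \<in> Y. src y \<in> src ` X}"
    unfolding nleq_def invm_KG[OF X] gprod_ginv_left_KG[OF X] gprod_src_image[OF M(2,1)] ..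
  also have "\<dots> \<longleftrightarrow> X \<subseteq> Y" using KG_src_inj[OF Y] by blast
  finally show ?thesis .
qed

lemma gprod_idems_eq_Int: assumes "X \<subseteq> E" "Z \<subseteq> E" shows "gprod M mult X Z = X \<inter> Z"
  using assms unfolding gprod_def
  by (auto simp: subset_iff src_of_idems tgt_of_idems idems_mult_self)
    (metis idems_mult_self src_of_idems tgt_of_idems)

lemma idems_KG_iff: assumes X: "X \<in> KG M mult"
  shows "X \<in> idems (KG M mult) (gprod M mult) \<longleftrightarrow> X \<subseteq> E"
proof
  assume "X \<in> idems (KG M mult) (gprod M mult)"
  then have XX: "gprod M mult X X = X" unfolding idems_def by auto
  show "X \<subseteq> E"
  proof
    fix x assume x: "x \<in> X"
    then have "x \<in> gprod M mult X X" using XX by simp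
    then obtain a b where ab: "x = a \<cdot> b" "a \<in> X" "b \<in> X" "src a = tgt b"
      unfolding mem_gprod_iff[of x] by blast
    have M: "a \<in> M" "b \<in> M" using ab X KG_closed by auto
    have "x = b" using KG_src_inj[OF X x ab(3)] src_mult[OF M ab(4)] ab(1) by simp
    moreover have "x = a" using KG_tgt_inj[OF X x ab(2)] tgt_mult[OF M ab(4)] ab(1) by simp
    ultimately show "x \<in> E" using ab M by (simp add: idems_iff)
  qed
next
  assume "X \<subseteq> E"
  then show "X \<in> idems (KG M mult) (gprod M mult)"
    using gprod_idems_eq_Int X unfolding idems_def by auto
qed

lemma compatible_KG_iff: assumes A: "A \<in> KG M mult" and B: "B \<in> KG M mult"
  shows "compatible (KG M mult) (gprod M mult) A B \<longleftrightarrow>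
    (\<forall>a\<in>A. \<forall>b\<in>B. tgt a = tgt b \<longrightarrow> a = b) \<and> (\<forall>a\<in>A. \<forall>b\<in>B. src a = src b \<longrightarrow> a = b)"
proof -
  have M: "A \<subseteq> M" "B \<subseteq> M" using A B KG_iff by auto
  show ?thesis
    unfolding compatible_def invm_KG[OF A] invm_KG[OF B]
    using idems_KG_iff gprod_KG ginv_KG A B
      gprod_ginv_left_idems_iff[OF M] gprod_ginv_right_idems_iff[OF M]
    by auto
qed

lemma Un_KG_iff_compatible: assumes A: "A \<in> KG M mult" and B: "B \<in> KG M mult"
  shows "A \<union> B \<in> KG M mult \<longleftrightarrow> compatible (KG M mult) (gprod M mult) A B"
proof -
  have "inj_on f (A \<union> B) \<longleftrightarrow> (\<forall>a\<in>A. \<forall>b\<in>B. f a = f b \<longrightarrow> a = b)"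
    if "inj_on f A" "inj_on f B" for f :: "'a \<Rightarrow> 'a"
    using that unfolding inj_on_def by (metis Un_iff)
  then show ?thesis using A B unfolding compatible_KG_iff[OF A B] KG_iff by auto
qed

lemma is_join_KG_iff:
  assumes A: "A \<in> KG M mult" and B: "B \<in> KG M mult" and U: "A \<union> B \<in> KG M mult"
  shows "is_join (KG M mult) (gprod M mult) {A, B} J \<longleftrightarrow> J = A \<union> B"
proof
  assume J: "is_join (KG M mult) (gprod M mult) {A, B} J"
  then have JK: "J \<in> KG M mult" by (simp add: is_join_def)
  have "A \<subseteq> J" "B \<subseteq> J" using J le_KG_iff_subset[OF _ JK] A B unfolding is_join_def by auto
  moreover have "J \<subseteq> A \<union> B"
    using J U le_KG_iff_subset[OF _ U] le_KG_iff_subset[OF JK U] A B unfolding is_join_def by blast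
  ultimately show "J = A \<union> B" by blast
next
  assume "J = A \<union> B"
  then show "is_join (KG M mult) (gprod M mult) {A, B} J"
    using A B U le_KG_iff_subset[OF A] le_KG_iff_subset[OF B] le_KG_iff_subset[OF U]
    unfolding is_join_def by blast
qed

lemma gprod_down_src: assumes x: "x \<in> M" shows "gprod M mult (down M mult x) {src x} = {x}"
proof (intro set_eqI iffI)
  fix z assume "z \<in> gprod M mult (down M mult x) {src x}"
  then obtain y where y: "z = y \<cdot> src x" "y \<in> M" "y \<preceq> x" "src y = tgt (src x)"
    unfolding mem_gprod_iff[of z] by (auto simp: mem_down_iff)
  have "src y = src x" using y(4) tgt_of_idems[of "src x"] x by simp
  then have "y = x" using y(3) x by (simp add: le_iff_src)
  then show "z \<in> {x}" using y x by simp
next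
  fix z assume "z \<in> {x}"
  moreover have "src x = tgt (src x)" "x = x \<cdot> src x" "x \<in> down M mult x"
    using tgt_of_idems[of "src x"] x by (simp_all add: mem_down_iff)
  ultimately show "z \<in> gprod M mult (down M mult x) {src x}" unfolding mem_gprod_iff by blast
qed

end

section \<open>Extension of a homomorphism from a finite inverse monoid\<close>

locale hom_to_boolean = S: inv_monoid S m u + T: bool_inv_monoid T n v w for S m u T n v w +
  fixes \<alpha> :: "'a \<Rightarrow> 'b"
  assumes finite_S: "finite S" and hom: "monoid_hom S m u T n v \<alpha>"
begin

lemma \<alpha>_closed [simp]: "x \<in> S \<Longrightarrow> \<alpha> x \<in> T"
  and \<alpha>_mult: "x \<in> S \<Longrightarrow> y \<in> S \<Longrightarrow> \<alpha> (m x y) = n (\<alpha> x) (\<alpha> y)"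
  and \<alpha>_one: "\<alpha> u = v"
  using hom unfolding monoid_hom_def by auto

lemma \<alpha>_inv: assumes x: "x \<in> S" shows "\<alpha> (S.iv x) = T.iv (\<alpha> x)"
  using x by (intro T.inv_eqI[symmetric]) (simp_all flip: \<alpha>_mult)

lemma \<alpha>_idems: "e \<in> S.E \<Longrightarrow> \<alpha> e \<in> T.E"
  by (simp add: S.idems_iff T.idems_iff flip: \<alpha>_mult)

lemma \<alpha>_mono: assumes "S.le x y" "x \<in> S" "y \<in> S" shows "T.le (\<alpha> x) (\<alpha> y)"
proof -
  obtain e where e: "e \<in> S.E" "x = m y e" using S.le_iff_idems_right assms by blast
  then have "\<alpha> x = n (\<alpha> y) (\<alpha> e)" using \<alpha>_mult assms S.idems_closed by simp
  moreover have "\<alpha> x \<in> T" "\<alpha> y \<in> T" using assms by auto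
  ultimately show ?thesis using T.le_iff_idems_right \<alpha>_idems e(1) by blast
qed

definition join_below :: "'a \<Rightarrow> 'b" where
  "join_below e = (THE j. is_join T n (\<alpha> ` (down S m e - {e})) j)"

lemma \<alpha>_down_idems: "e \<in> S.E \<Longrightarrow> \<alpha> ` down S m e \<subseteq> T.E"
  using \<alpha>_idems S.down_idems_subset by blast

lemma is_join_join_below: assumes e: "e \<in> S.E"
  shows "is_join T n (\<alpha> ` (down S m e - {e})) (join_below e)"
  unfolding join_below_def
proof (rule T.is_join_The)
  show "finite (\<alpha> ` (down S m e - {e}))" using finite_S by (auto simp: down_def)
  show "\<alpha> ` (down S m e - {e}) \<subseteq> T" using \<alpha>_down_idems[OF e] T.idems_closed by blast
  show "T.pairwise_compatible (\<alpha> ` (down S m e - {e}))"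
    using \<alpha>_down_idems[OF e] by (intro T.pairwise_compatible_idems) blast
qed

lemma join_below_idems: "e \<in> S.E \<Longrightarrow> join_below e \<in> T.E"
  using T.is_join_idems[OF is_join_join_below] \<alpha>_down_idems by blast

lemma join_below_le: assumes e: "e \<in> S.E" shows "T.le (join_below e) (\<alpha> e)"
  using is_join_join_below[OF e] \<alpha>_mono e S.idems_closed
  unfolding is_join_def by (auto simp: S.mem_down_iff)

definition complement :: "'b \<Rightarrow> 'b" where
  "complement q = (SOME c. c \<in> T.E \<and> n q c = w \<and> is_join T n {q, c} v)"

lemma complement_spec:
  "q \<in> T.E \<Longrightarrow> complement q \<in> T.E \<and> n q (complement q) = w \<and> is_join T n {q, complement q} v"
  unfolding complement_def by (rule someI_ex) (use T.complement_exists in blast)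

text \<open>The image of the singleton \<open>{e}\<close> under every extension.\<close>
definition \<epsilon> :: "'a \<Rightarrow> 'b" where
  "\<epsilon> e = n (\<alpha> e) (complement (join_below e))"

lemma complement_join_below:
  assumes "e \<in> S.E"
  shows "complement (join_below e) \<in> T.E" "n (join_below e) (complement (join_below e)) = w"
    and "is_join T n {join_below e, complement (join_below e)} v"
  using complement_spec[OF join_below_idems[OF assms]] by auto

lemma \<epsilon>_idems: "e \<in> S.E \<Longrightarrow> \<epsilon> e \<in> T.E"
  unfolding \<epsilon>_def using T.idems_mult_closed \<alpha>_idems complement_join_below by blast

lemma \<epsilon>_closed: "e \<in> S.E \<Longrightarrow> \<epsilon> e \<in> T"
  using \<epsilon>_idems T.idems_closed by blast

lemma \<alpha>_mult_\<epsilon>: "e \<in> S.E \<Longrightarrow> n (\<alpha> e) (\<epsilon> e) = \<epsilon> e"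
  unfolding \<epsilon>_def using \<alpha>_idems complement_join_below T.idems_closed by simp

lemma \<epsilon>_mult_\<alpha>: "e \<in> S.E \<Longrightarrow> n (\<epsilon> e) (\<alpha> e) = \<epsilon> e"
  using \<alpha>_mult_\<epsilon> T.idems_commute \<epsilon>_idems \<alpha>_idems by metis

lemma is_join_join_below_\<epsilon>: assumes e: "e \<in> S.E" shows "is_join T n {join_below e, \<epsilon> e} (\<alpha> e)"
proof -
  have ae: "\<alpha> e \<in> T" using e S.idems_closed by simp
  have "is_join T n ((\<lambda>x. n (\<alpha> e) x) ` {join_below e, complement (join_below e)}) (n (\<alpha> e) v)"
    by (rule T.is_join_mult_left[OF _ _ _ complement_join_below(3)[OF e] ae])
      (use join_below_idems complement_join_below e T.idems_closed
        T.pairwise_compatible_idems[of "{join_below e, complement (join_below e)}"] in auto)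
  moreover have "n (\<alpha> e) (join_below e) = join_below e"
    using join_below_le[OF e] T.le_idems_iff[OF join_below_idems \<alpha>_idems] e by simp
  ultimately show ?thesis using ae unfolding \<epsilon>_def by simp
qed

lemma \<epsilon>_mult_join_below: assumes e: "e \<in> S.E" shows "n (\<epsilon> e) (join_below e) = w"
proof -
  have M: "\<alpha> e \<in> T" "complement (join_below e) \<in> T" "join_below e \<in> T"
    using e S.idems_closed complement_join_below join_below_idems T.idems_closed by auto
  have "n (\<epsilon> e) (join_below e) = n (\<alpha> e) (n (join_below e) (complement (join_below e)))"
    unfolding \<epsilon>_def using M T.idems_commute[OF complement_join_below(1) join_below_idems] e by simp
  then show ?thesis using complement_join_below(2)[OF e] M by simp
qed

lemma \<alpha>_mult_complement_join_below:
  assumes e: "e \<in> S.E" and f: "f \<in> down S m e - {e}"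
  shows "n (\<alpha> f) (complement (join_below e)) = w"
proof -
  have af: "\<alpha> f \<in> T.E" using \<alpha>_down_idems[OF e] f by blast
  have "T.le (\<alpha> f) (join_below e)" using is_join_join_below[OF e] f unfolding is_join_def by blast
  then have "\<alpha> f = n (\<alpha> f) (join_below e)"
    using T.le_idems_iff'[OF af join_below_idems[OF e]] by simp
  then have "n (\<alpha> f) (complement (join_below e))
      = n (\<alpha> f) (n (join_below e) (complement (join_below e)))"
    using af e join_below_idems complement_join_below T.idems_closed by (metis T.mult_assoc)
  then show ?thesis using complement_join_below(2)[OF e] af T.idems_closed by simp
qed

text \<open>If \<open>e f \<noteq> e\<close> then \<open>e f < e\<close>, so \<open>\<alpha> (e f)\<close> is killed by the complement in \<open>\<epsilon> e\<close>;
  otherwise \<open>e < f\<close> and \<open>\<alpha> e\<close> is killed by the complement in \<open>\<epsilon> f\<close>.\<close>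
lemma \<epsilon>_orthogonal:
  assumes e: "e \<in> S.E" and f: "f \<in> S.E" and ne: "e \<noteq> f"
  shows "n (\<epsilon> e) (\<epsilon> f) = w"
proof -
  let ?ce = "complement (join_below e)" and ?cf = "complement (join_below f)"
  have I: "\<alpha> e \<in> T.E" "\<alpha> f \<in> T.E" "?ce \<in> T.E" "?cf \<in> T.E"
    using \<alpha>_idems e f complement_join_below by auto
  have M: "\<alpha> e \<in> T" "\<alpha> f \<in> T" "?ce \<in> T" "?cf \<in> T" using I T.idems_closed by auto
  have eM: "e \<in> S" "f \<in> S" using e f S.idems_closed by auto
  show ?thesis
  proof (cases "m e f = e")
    case False
    have "m e f \<in> down S m e - {e}"
      using S.idems_mult_closed[OF e f] S.idems_mult_le_left[OF e f] False S.idems_closed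
      by (auto simp: S.mem_down_iff)
    then have "n (\<alpha> (m e f)) ?ce = w" by (rule \<alpha>_mult_complement_join_below[OF e])
    then have "n (n (\<alpha> e) (\<alpha> f)) ?ce = w" using \<alpha>_mult eM by simp
    moreover have "n (\<epsilon> e) (\<epsilon> f) = n (n (n (\<alpha> e) (\<alpha> f)) ?ce) ?cf"
      unfolding \<epsilon>_def using I M by (simp add: T.idems_commute T.idems_left_commute)
    ultimately show ?thesis using M by simp
  next
    case True
    then have "e \<in> down S m f - {f}"
      using S.le_idems_iff'[OF e f] ne eM by (simp add: S.mem_down_iff)
    then have "n (\<alpha> e) ?cf = w" using \<alpha>_mult_complement_join_below[OF f] by simp
    moreover have "n (\<epsilon> e) (\<epsilon> f) = n (n ?ce (\<alpha> f)) (n (\<alpha> e) ?cf)"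
      unfolding \<epsilon>_def using I M by (simp add: T.idems_commute T.idems_left_commute)
    ultimately show ?thesis using M by simp
  qed
qed

lemma is_join_\<epsilon>_down: assumes "e \<in> S.E" shows "is_join T n (\<epsilon> ` down S m e) (\<alpha> e)"
  using finite_S assms
proof (induction e rule: S.idems_down_induct)
  case (less e)
  have down_E: "down S m f \<subseteq> S.E" if "f \<in> down S m e - {e}" for f
    using that S.down_idems_subset[OF less(1)] S.down_idems_subset by blast
  have "is_join T n (\<Union>f\<in>down S m e - {e}. \<epsilon> ` down S m f) (join_below e)"
  proof (subst T.is_join_UN_iff)
    show "is_join T n (\<epsilon> ` down S m f) (\<alpha> f)" if "f \<in> down S m e - {e}" for f
      using less(2)[OF that] .
    show "\<epsilon> ` down S m f \<subseteq> T" if "f \<in> down S m e - {e}" for f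
      using down_E[OF that] \<epsilon>_closed by blast
    show "is_join T n (\<alpha> ` (down S m e - {e})) (join_below e)"
      using is_join_join_below[OF less(1)] .
  qed
  moreover have "(\<Union>f\<in>down S m e - {e}. down S m f) = down S m e - {e}"
  proof
    show "(\<Union>f\<in>down S m e - {e}. down S m f) \<subseteq> down S m e - {e}"
      using S.down_subset_down[OF less(1)] by blast
    show "down S m e - {e} \<subseteq> (\<Union>f\<in>down S m e - {e}. down S m f)"
      by (auto simp: S.mem_down_iff)
  qed
  ultimately have below: "is_join T n (\<epsilon> ` (down S m e - {e})) (join_below e)"
    by (metis image_UN)
  have sub: "{\<epsilon> e} \<subseteq> T" "\<epsilon> ` (down S m e - {e}) \<subseteq> T"
    using \<epsilon>_closed less(1) S.down_idems_subset[OF less(1)] by auto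
  have "is_join T n {\<epsilon> e, join_below e} (\<alpha> e)"
    using is_join_join_below_\<epsilon>[OF less(1)] by (simp add: insert_commute)
  then have "is_join T n ({\<epsilon> e} \<union> \<epsilon> ` (down S m e - {e})) (\<alpha> e)"
    using T.is_join_Un_iff[OF T.is_join_singleton[OF \<epsilon>_closed[OF less(1)]] below sub] by simp
  moreover have "\<epsilon> ` down S m e = {\<epsilon> e} \<union> \<epsilon> ` (down S m e - {e})"
    using less(1) S.idems_closed by (auto simp: S.mem_down_iff)
  ultimately show ?case by simp
qed

lemma join_below_conj:
  assumes x: "x \<in> S"
  shows "n (n (\<alpha> x) (join_below (S.src x))) (T.iv (\<alpha> x)) = join_below (S.tgt x)"
proof -
  have "is_join T n ((\<lambda>y. n (n (\<alpha> x) y) (T.iv (\<alpha> x))) ` \<alpha> ` (down S m (S.src x) - {S.src x}))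
      (n (n (\<alpha> x) (join_below (S.src x))) (T.iv (\<alpha> x)))"
    using x \<alpha>_down_idems[of "S.src x"] finite_S
    by (intro T.is_join_conj[OF is_join_join_below]) (auto simp: down_def)
  moreover have "(\<lambda>y. n (n (\<alpha> x) y) (T.iv (\<alpha> x))) ` \<alpha> ` (down S m (S.src x) - {S.src x})
      = \<alpha> ` (down S m (S.tgt x) - {S.tgt x})"
    unfolding S.down_tgt_conj[OF x] image_image using x
    by (intro image_cong) (auto simp: \<alpha>_mult \<alpha>_inv S.mem_down_iff)
  ultimately show ?thesis using is_join_join_below[of "S.tgt x"] x T.is_join_unique by auto
qed

text \<open>Conjugation by \<open>\<alpha> x\<close> carries \<open>join_below (src x)\<close> and \<open>\<alpha> (src x)\<close> to
  \<open>join_below (tgt x)\<close> and \<open>\<alpha> (tgt x)\<close>, hence also the relative complement of the one in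
  the other.\<close>
lemma \<epsilon>_conj:
  assumes x: "x \<in> S"
  shows "n (n (\<alpha> x) (\<epsilon> (S.src x))) (T.iv (\<alpha> x)) = \<epsilon> (S.tgt x)"
proof -
  define s where "s = \<alpha> x"
  define e where "e = S.src x"
  define e' where "e' = S.tgt x"
  have sT: "s \<in> T" and E: "e \<in> S.E" "e' \<in> S.E" using x by (simp_all add: s_def e_def e'_def)
  have ss: "n (T.iv s) s = \<alpha> e" and ss': "n s (T.iv s) = \<alpha> e'"
    using x by (simp_all add: s_def e_def e'_def \<alpha>_mult \<alpha>_inv)
  have M: "\<alpha> e \<in> T" "\<epsilon> e \<in> T" "join_below e \<in> T"
    using E \<epsilon>_closed S.idems_closed join_below_idems T.idems_closed by auto
  have J: "n (n s (join_below e)) (T.iv s) = join_below e'"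
    using join_below_conj[OF x] by (simp add: s_def e_def e'_def)
  define r where "r = n (n s (\<epsilon> e)) (T.iv s)"
  have r: "r \<in> T.E" unfolding r_def using T.conj_idems[OF \<epsilon>_idems[OF E(1)] sT] .
  have "n r (join_below e') = n s (n (n (\<epsilon> e) (\<alpha> e)) (n (join_below e) (T.iv s)))"
    unfolding r_def J[symmetric] using sT M by (simp flip: ss)
  then have r_orth: "n r (join_below e') = w"
    using \<epsilon>_mult_\<alpha>[OF E(1)] \<epsilon>_mult_join_below[OF E(1)] sT M by (simp flip: T.mult_assoc)
  have "is_join T n ((\<lambda>y. n (n s y) (T.iv s)) ` {join_below e, \<epsilon> e}) (n (n s (\<alpha> e)) (T.iv s))"
    using is_join_join_below_\<epsilon>[OF E(1)] join_below_idems \<epsilon>_idems E sT by (intro T.is_join_conj) auto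
  moreover have "n (n s (\<alpha> e)) (T.iv s) = \<alpha> e'" using sT ss ss' by (simp flip: ss)
  ultimately have "is_join T n {r, join_below e'} (\<alpha> e')"
    using J unfolding r_def by (simp add: insert_commute)
  moreover have "is_join T n {\<epsilon> e', join_below e'} (\<alpha> e')"
    using is_join_join_below_\<epsilon>[OF E(2)] by (simp add: insert_commute)
  ultimately have "r = \<epsilon> e'"
    using T.relative_complement_unique[OF r \<epsilon>_idems[OF E(2)] join_below_idems[OF E(2)] r_orth
        \<epsilon>_mult_join_below[OF E(2)]] by blast
  then show ?thesis by (simp add: r_def s_def e_def e'_def)
qed

lemma \<epsilon>_conj_commute: assumes x: "x \<in> S" shows "n (\<alpha> x) (\<epsilon> (S.src x)) = n (\<epsilon> (S.tgt x)) (\<alpha> x)"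
proof -
  have M: "\<alpha> x \<in> T" "\<epsilon> (S.src x) \<in> T" using x \<epsilon>_closed by auto
  have "n (\<epsilon> (S.tgt x)) (\<alpha> x) = n (\<alpha> x) (n (\<epsilon> (S.src x)) (n (T.iv (\<alpha> x)) (\<alpha> x)))"
    using \<epsilon>_conj[OF x] M by (simp flip: \<epsilon>_conj[OF x])
  also have "\<dots> = n (\<alpha> x) (\<epsilon> (S.src x))"
    using \<epsilon>_mult_\<alpha>[of "S.src x"] x by (simp add: \<alpha>_mult \<alpha>_inv flip: \<alpha>_inv)
  finally show ?thesis by simp
qed

text \<open>The image of the singleton \<open>{x}\<close>, forced by \<open>{x} = x\<down> {src x}\<close>.\<close>
definition \<gamma>\<^sub>0 :: "'a \<Rightarrow> 'b" where
  "\<gamma>\<^sub>0 x = n (\<alpha> x) (\<epsilon> (S.src x))"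

definition \<Gamma> :: "'a set \<Rightarrow> 'b" where
  "\<Gamma> A = (THE j. is_join T n (\<gamma>\<^sub>0 ` A) j)"

lemma \<gamma>\<^sub>0_closed: "x \<in> S \<Longrightarrow> \<gamma>\<^sub>0 x \<in> T"
  unfolding \<gamma>\<^sub>0_def using \<epsilon>_closed by simp

lemma \<gamma>\<^sub>0_eq_tgt: "x \<in> S \<Longrightarrow> \<gamma>\<^sub>0 x = n (\<epsilon> (S.tgt x)) (\<alpha> x)"
  unfolding \<gamma>\<^sub>0_def using \<epsilon>_conj_commute by simp

lemma
  assumes a: "a \<in> S" and b: "b \<in> S"
  shows \<gamma>\<^sub>0_mult: "S.src a = S.tgt b \<Longrightarrow> n (\<gamma>\<^sub>0 a) (\<gamma>\<^sub>0 b) = \<gamma>\<^sub>0 (m a b)"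
    and \<gamma>\<^sub>0_mult_orthogonal: "S.src a \<noteq> S.tgt b \<Longrightarrow> n (\<gamma>\<^sub>0 a) (\<gamma>\<^sub>0 b) = w"
proof -
  have E: "S.src a \<in> S.E" "S.tgt b \<in> S.E" using a b by auto
  have M: "\<epsilon> (S.src a) \<in> T" "\<epsilon> (S.tgt b) \<in> T" "\<alpha> a \<in> T" "\<alpha> b \<in> T"
    using E \<epsilon>_closed a b by auto
  have prod: "n (\<gamma>\<^sub>0 a) (\<gamma>\<^sub>0 b) = n (\<alpha> a) (n (n (\<epsilon> (S.src a)) (\<epsilon> (S.tgt b))) (\<alpha> b))"
    unfolding \<gamma>\<^sub>0_def[of a] \<gamma>\<^sub>0_eq_tgt[OF b] using M by simp
  show "n (\<gamma>\<^sub>0 a) (\<gamma>\<^sub>0 b) = w" if "S.src a \<noteq> S.tgt b"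
    using prod \<epsilon>_orthogonal[OF E that] M by simp
  assume eq: "S.src a = S.tgt b"
  have "n (\<gamma>\<^sub>0 a) (\<gamma>\<^sub>0 b) = n (\<alpha> a) (\<gamma>\<^sub>0 b)"
    using prod eq T.idems_mult_self[OF \<epsilon>_idems[OF E(2)]] \<gamma>\<^sub>0_eq_tgt[OF b] by simp
  also have "\<dots> = n (\<alpha> (m a b)) (\<epsilon> (S.src b))"
    unfolding \<gamma>\<^sub>0_def using a b M \<epsilon>_closed[of "S.src b"] by (simp add: \<alpha>_mult)
  also have "S.src b = S.src (m a b)" using S.src_mult[OF a b eq] by simp
  finally show "n (\<gamma>\<^sub>0 a) (\<gamma>\<^sub>0 b) = \<gamma>\<^sub>0 (m a b)" unfolding \<gamma>\<^sub>0_def .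
qed

lemma \<gamma>\<^sub>0_pairwise_compatible: assumes A: "A \<in> KG S m" shows "T.pairwise_compatible (\<gamma>\<^sub>0 ` A)"
  unfolding T.pairwise_compatible_def
proof (intro ballI)
  fix x y assume "x \<in> \<gamma>\<^sub>0 ` A" "y \<in> \<gamma>\<^sub>0 ` A"
  then obtain a b where ab: "a \<in> A" "b \<in> A" "x = \<gamma>\<^sub>0 a" "y = \<gamma>\<^sub>0 b" by auto
  have S: "a \<in> S" "b \<in> S" using ab A S.KG_closed by auto
  show "compatible T n x y"
  proof (cases "a = b")
    case True
    then show ?thesis using ab \<gamma>\<^sub>0_closed S T.compatible_refl by simp
  next
    case False
    have src: "S.src a \<noteq> S.src b" and tgt: "S.tgt a \<noteq> S.tgt b"
      using False S.KG_src_inj[OF A ab(1,2)] S.KG_tgt_inj[OF A ab(1,2)] by auto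
    have E: "S.src a \<in> S.E" "S.src b \<in> S.E" "S.tgt a \<in> S.E" "S.tgt b \<in> S.E" using S by auto
    have M: "\<epsilon> (S.src a) \<in> T" "\<epsilon> (S.src b) \<in> T" "\<epsilon> (S.tgt a) \<in> T" "\<epsilon> (S.tgt b) \<in> T"
      "\<alpha> a \<in> T" "\<alpha> b \<in> T"
      using E \<epsilon>_closed S by auto
    have "n (T.iv x) y = n (T.iv (\<alpha> a)) (n (n (\<epsilon> (S.tgt a)) (\<epsilon> (S.tgt b))) (\<alpha> b))"
      unfolding ab \<gamma>\<^sub>0_eq_tgt[OF S(1)] \<gamma>\<^sub>0_eq_tgt[OF S(2)] using M \<epsilon>_idems E
      by (simp add: T.inv_mult T.inv_idems)
    then have "n (T.iv x) y = w" using \<epsilon>_orthogonal[OF E(3,4) tgt] M by simp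
    moreover have "n x (T.iv y) = n (\<alpha> a) (n (n (\<epsilon> (S.src a)) (\<epsilon> (S.src b))) (T.iv (\<alpha> b)))"
      unfolding ab \<gamma>\<^sub>0_def using M \<epsilon>_idems E by (simp add: T.inv_mult T.inv_idems)
    then have "n x (T.iv y) = w" using \<epsilon>_orthogonal[OF E(1,2) src] M by simp
    ultimately show ?thesis by (rule T.compatible_if_orthogonal)
  qed
qed

lemma is_join_\<Gamma>: assumes A: "A \<in> KG S m" shows "is_join T n (\<gamma>\<^sub>0 ` A) (\<Gamma> A)"
proof -
  have "A \<subseteq> S" using A S.KG_iff by auto
  then show ?thesis unfolding \<Gamma>_def
    using finite_S \<gamma>\<^sub>0_closed \<gamma>\<^sub>0_pairwise_compatible[OF A]
    by (intro T.is_join_The) (auto intro: finite_subset)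
qed

lemma \<Gamma>_closed: "A \<in> KG S m \<Longrightarrow> \<Gamma> A \<in> T"
  using is_join_\<Gamma> T.is_join_closed by blast

lemma \<gamma>\<^sub>0_image_down:
  assumes a: "a \<in> S" shows "\<gamma>\<^sub>0 ` down S m a = (\<lambda>y. n (\<alpha> a) y) ` \<epsilon> ` down S m (S.src a)"
proof (intro set_eqI iffI)
  fix z assume "z \<in> \<gamma>\<^sub>0 ` down S m a"
  then obtain x where x: "x \<in> S" "S.le x a" "z = \<gamma>\<^sub>0 x" by (auto simp: S.mem_down_iff)
  have xa: "x = m a (S.src x)" using x(2) S.le_iff_src by blast
  have "\<alpha> x = n (\<alpha> a) (\<alpha> (S.src x))"
    using trans[OF arg_cong[OF xa, of \<alpha>] \<alpha>_mult[OF a S.idems_closed[OF S.src_idems[OF x(1)]]]] .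
  then have "z = n (\<alpha> a) (n (\<alpha> (S.src x)) (\<epsilon> (S.src x)))" using x a \<epsilon>_closed by (simp add: \<gamma>\<^sub>0_def)
  then have "z = n (\<alpha> a) (\<epsilon> (S.src x))" using \<alpha>_mult_\<epsilon> x by simp
  moreover have "S.src x \<in> down S m (S.src a)"
    using S.le_src_mono[OF x(2,1) a] x by (simp add: S.mem_down_iff)
  ultimately show "z \<in> (\<lambda>y. n (\<alpha> a) y) ` \<epsilon> ` down S m (S.src a)" by blast
next
  fix z assume "z \<in> (\<lambda>y. n (\<alpha> a) y) ` \<epsilon> ` down S m (S.src a)"
  then obtain f where f: "f \<in> down S m (S.src a)" "z = n (\<alpha> a) (\<epsilon> f)" by auto
  have fE: "f \<in> S.E" using f S.down_idems_subset[of "S.src a"] a by auto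
  have fa: "m (S.src a) f = f"
    using f fE a S.le_idems_iff[of f "S.src a"] by (simp add: S.mem_down_iff)
  have x: "m a f \<in> S" "S.le (m a f) a" using a fE S.idems_closed S.le_iff_idems_right by auto
  have "S.src (m a f) = m f (m (S.src a) f)"
    using a fE S.idems_closed by (simp add: S.inv_mult S.inv_idems)
  then have src: "S.src (m a f) = f" using fa fE by (simp add: S.idems_mult_self)
  have "\<gamma>\<^sub>0 (m a f) = n (\<alpha> a) (n (\<alpha> f) (\<epsilon> f))"
    using a fE \<epsilon>_closed[OF fE] S.idems_closed by (simp add: \<gamma>\<^sub>0_def src \<alpha>_mult)
  then have "\<gamma>\<^sub>0 (m a f) = z" using \<alpha>_mult_\<epsilon>[OF fE] f by simp
  then show "z \<in> \<gamma>\<^sub>0 ` down S m a" using x by (auto simp: S.mem_down_iff)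
qed

lemma \<Gamma>_down: assumes a: "a \<in> S" shows "\<Gamma> (down S m a) = \<alpha> a"
proof -
  have E: "S.src a \<in> S.E" using a by simp
  have "is_join T n ((\<lambda>y. n (\<alpha> a) y) ` \<epsilon> ` down S m (S.src a)) (n (\<alpha> a) (\<alpha> (S.src a)))"
  proof (rule T.is_join_mult_left[OF _ _ _ is_join_\<epsilon>_down[OF E]])
    show "finite (\<epsilon> ` down S m (S.src a))" using finite_S by (auto simp: down_def)
    show "\<epsilon> ` down S m (S.src a) \<subseteq> T" "T.pairwise_compatible (\<epsilon> ` down S m (S.src a))"
      using S.down_idems_subset[OF E] \<epsilon>_idems T.idems_closed T.pairwise_compatible_idems
      by (blast, meson image_subsetI subset_iff)
  qed (use a in simp)
  moreover have "n (\<alpha> a) (\<alpha> (S.src a)) = \<alpha> a" using a by (simp flip: \<alpha>_mult)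
  ultimately show ?thesis
    using is_join_\<Gamma>[OF S.down_KG[OF a]] T.is_join_unique \<gamma>\<^sub>0_image_down[OF a] by auto
qed

lemma \<Gamma>_one: "\<Gamma> S.E = v"
  using \<Gamma>_down[of u] S.down_one \<alpha>_one by simp

lemma \<Gamma>_empty: "\<Gamma> {} = w"
  using is_join_\<Gamma>[OF S.empty_KG] T.is_join_empty T.is_join_unique by simp

lemma \<Gamma>_Un:
  assumes A: "A \<in> KG S m" and B: "B \<in> KG S m" and U: "A \<union> B \<in> KG S m"
  shows "is_join T n {\<Gamma> A, \<Gamma> B} (\<Gamma> (A \<union> B))"
proof -
  have "\<gamma>\<^sub>0 ` A \<subseteq> T" "\<gamma>\<^sub>0 ` B \<subseteq> T" using A B S.KG_closed \<gamma>\<^sub>0_closed by auto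
  then show ?thesis
    using is_join_\<Gamma>[OF U] T.is_join_Un_iff[OF is_join_\<Gamma>[OF A] is_join_\<Gamma>[OF B]]
    by (simp add: image_Un)
qed

lemma \<gamma>\<^sub>0_products:
  assumes "A \<subseteq> S" "B \<subseteq> S"
  shows "insert w {n x y |x y. x \<in> \<gamma>\<^sub>0 ` A \<and> y \<in> \<gamma>\<^sub>0 ` B} = insert w (\<gamma>\<^sub>0 ` gprod S m A B)"
proof (intro set_eqI iffI)
  fix z assume "z \<in> insert w {n x y |x y. x \<in> \<gamma>\<^sub>0 ` A \<and> y \<in> \<gamma>\<^sub>0 ` B}"
  then consider "z = w" | a b where "a \<in> A" "b \<in> B" "z = n (\<gamma>\<^sub>0 a) (\<gamma>\<^sub>0 b)" by auto
  then show "z \<in> insert w (\<gamma>\<^sub>0 ` gprod S m A B)"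
  proof cases
    case (2 a b)
    then have ab: "a \<in> S" "b \<in> S" using assms by auto
    show ?thesis
    proof (cases "S.src a = S.tgt b")
      case True
      then have "m a b \<in> gprod S m A B" using 2 by (auto simp: S.mem_gprod_iff)
      then show ?thesis using \<gamma>\<^sub>0_mult[OF ab True] 2 by simp
    qed (use \<gamma>\<^sub>0_mult_orthogonal[OF ab] 2 in simp)
  qed simp
next
  fix z assume "z \<in> insert w (\<gamma>\<^sub>0 ` gprod S m A B)"
  then consider "z = w" | a b where "a \<in> A" "b \<in> B" "S.src a = S.tgt b" "z = \<gamma>\<^sub>0 (m a b)"
    by (auto simp: S.mem_gprod_iff)
  then show "z \<in> insert w {n x y |x y. x \<in> \<gamma>\<^sub>0 ` A \<and> y \<in> \<gamma>\<^sub>0 ` B}"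
  proof cases
    case (2 a b)
    then have ab: "a \<in> S" "b \<in> S" using assms by auto
    then have "z = n (\<gamma>\<^sub>0 a) (\<gamma>\<^sub>0 b)" using \<gamma>\<^sub>0_mult[OF ab 2(3)] 2(4) by simp
    then show ?thesis using 2 by blast
  qed simp
qed

lemma \<Gamma>_gprod: assumes A: "A \<in> KG S m" and B: "B \<in> KG S m"
  shows "\<Gamma> (gprod S m A B) = n (\<Gamma> A) (\<Gamma> B)"
proof -
  have sub: "A \<subseteq> S" "B \<subseteq> S" using A B S.KG_iff by auto
  then have "is_join T n {n x y |x y. x \<in> \<gamma>\<^sub>0 ` A \<and> y \<in> \<gamma>\<^sub>0 ` B} (n (\<Gamma> A) (\<Gamma> B))"
    using finite_S \<gamma>\<^sub>0_closed
    by (intro T.is_join_mult \<gamma>\<^sub>0_pairwise_compatible is_join_\<Gamma> A B) (auto intro: finite_subset)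
  then have "is_join T n (insert w (\<gamma>\<^sub>0 ` gprod S m A B)) (n (\<Gamma> A) (\<Gamma> B))"
    by (simp flip: \<gamma>\<^sub>0_products[OF sub] add: T.is_join_insert_zero)
  then show ?thesis
    using is_join_\<Gamma>[OF S.gprod_KG[OF A B]] T.is_join_unique T.is_join_insert_zero by blast
qed

definition extension :: "('a set \<Rightarrow> 'b) \<Rightarrow> bool" where
  "extension \<gamma> \<longleftrightarrow> \<gamma> \<in> KG S m \<rightarrow>\<^sub>E T
     \<and> bim_morphism (KG S m) (gprod S m) (idems S m) {} T n v w \<gamma>
     \<and> (\<forall>a\<in>S. \<gamma> (down S m a) = \<alpha> a)"

lemma extension_\<Gamma>: "extension (restrict \<Gamma> (KG S m))"
  unfolding extension_def bim_morphism_def monoid_hom_def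
proof (intro conjI ballI allI impI)
  show "restrict \<Gamma> (KG S m) \<in> KG S m \<rightarrow>\<^sub>E T" "restrict \<Gamma> (KG S m) \<in> KG S m \<rightarrow> T"
    using \<Gamma>_closed by auto
  show "restrict \<Gamma> (KG S m) (down S m a) = \<alpha> a" if "a \<in> S" for a
    using \<Gamma>_down[OF that] S.down_KG[OF that] by simp
  show "restrict \<Gamma> (KG S m) (gprod S m A B) = n (restrict \<Gamma> (KG S m) A) (restrict \<Gamma> (KG S m) B)"
    if "A \<in> KG S m" "B \<in> KG S m" for A B
    using \<Gamma>_gprod S.gprod_KG that by simp
  show "restrict \<Gamma> (KG S m) S.E = v" using \<Gamma>_one S.idems_subset_KG by simp
  show "restrict \<Gamma> (KG S m) {} = w" using \<Gamma>_empty S.empty_KG by simp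
  fix A B J assume AB: "A \<in> KG S m" "B \<in> KG S m"
    and J: "compatible (KG S m) (gprod S m) A B \<and> is_join (KG S m) (gprod S m) {A, B} J"
  have U: "A \<union> B \<in> KG S m" using S.Un_KG_iff_compatible[OF AB] J by simp
  then have "J = A \<union> B" using S.is_join_KG_iff[OF AB U] J by simp
  then show "is_join T n {restrict \<Gamma> (KG S m) A, restrict \<Gamma> (KG S m) B} (restrict \<Gamma> (KG S m) J)"
    using \<Gamma>_Un[OF AB U] AB U by simp
qed

context
  fixes \<gamma> :: "'a set \<Rightarrow> 'b" assumes \<gamma>: "extension \<gamma>"
begin

lemma extension_closed: "A \<in> KG S m \<Longrightarrow> \<gamma> A \<in> T"
  and extension_gprod: "A \<in> KG S m \<Longrightarrow> B \<in> KG S m \<Longrightarrow> \<gamma> (gprod S m A B) = n (\<gamma> A) (\<gamma> B)"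
  and extension_empty: "\<gamma> {} = w"
  and extension_down: "a \<in> S \<Longrightarrow> \<gamma> (down S m a) = \<alpha> a"
  using \<gamma> unfolding extension_def bim_morphism_def monoid_hom_def by auto

lemma extension_Un:
  assumes A: "A \<in> KG S m" and B: "B \<in> KG S m" and U: "A \<union> B \<in> KG S m"
  shows "is_join T n {\<gamma> A, \<gamma> B} (\<gamma> (A \<union> B))"
proof -
  have "compatible (KG S m) (gprod S m) A B" using S.Un_KG_iff_compatible[OF A B] U by simp
  moreover have "is_join (KG S m) (gprod S m) {A, B} (A \<union> B)"
    using S.is_join_KG_iff[OF A B U] by simp
  moreover have "\<forall>a\<in>KG S m. \<forall>b\<in>KG S m. \<forall>j. compatible (KG S m) (gprod S m) a b
      \<and> is_join (KG S m) (gprod S m) {a, b} j \<longrightarrow> is_join T n {\<gamma> a, \<gamma> b} (\<gamma> j)"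
    using \<gamma> unfolding extension_def bim_morphism_def by blast
  ultimately show ?thesis using A B by blast
qed

lemma extension_is_join_singletons:
  assumes A: "A \<in> KG S m" shows "is_join T n ((\<lambda>x. \<gamma> {x}) ` A) (\<gamma> A)"
proof -
  have "finite A" using A S.KG_iff finite_S finite_subset by blast
  then show ?thesis using A
  proof (induction A rule: finite_induct)
    case empty
    then show ?case using extension_empty T.is_join_empty by simp
  next
    case (insert x F)
    have F: "F \<in> KG S m" and X: "{x} \<in> KG S m" using insert.prems S.KG_subset by blast+
    have "is_join T n {\<gamma> {x}, \<gamma> F} (\<gamma> (insert x F))"
      using extension_Un[OF X F] insert.prems by simp
    moreover have "\<gamma> {x} \<in> T" "(\<lambda>x. \<gamma> {x}) ` F \<subseteq> T"
      using extension_closed X F S.KG_subset by auto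
    ultimately have "is_join T n ({\<gamma> {x}} \<union> (\<lambda>x. \<gamma> {x}) ` F) (\<gamma> (insert x F))"
      using T.is_join_Un_iff[OF T.is_join_singleton insert.IH[OF F]] by simp
    then show ?case by simp
  qed
qed

lemma extension_singleton: assumes x: "x \<in> S" shows "\<gamma> {x} = n (\<alpha> x) (\<gamma> {S.src x})"
proof -
  have "\<gamma> {x} = \<gamma> (gprod S m (down S m x) {S.src x})" using S.gprod_down_src[OF x] by simp
  also have "\<dots> = n (\<alpha> x) (\<gamma> {S.src x})"
    using extension_gprod S.down_KG[OF x] S.singleton_KG x extension_down by simp
  finally show ?thesis .
qed

lemma extension_idems: assumes "X \<subseteq> S.E" shows "\<gamma> X \<in> T.E"
proof -
  have K: "X \<in> KG S m" using S.idems_subset_KG assms by blast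
  have "\<gamma> X = \<gamma> (gprod S m X X)" using S.gprod_idems_eq_Int[OF assms assms] by simp
  then show ?thesis using extension_gprod K extension_closed by (simp add: T.idems_iff)
qed

lemma extension_idem_singleton:
  assumes e: "e \<in> S.E"
  shows "is_join T n {\<gamma> {e}, \<gamma> (down S m e - {e})} (\<alpha> e)"
    and "n (\<gamma> {e}) (\<gamma> (down S m e - {e})) = w"
proof -
  have sub: "down S m e - {e} \<subseteq> S.E" "{e} \<subseteq> S.E" using e S.down_idems_subset by auto
  note K = S.idems_subset_KG[OF sub(1)] S.idems_subset_KG[OF sub(2)]
    S.idems_subset_KG[OF Un_least[OF sub(2) sub(1)]]
  have "{e} \<union> (down S m e - {e}) = down S m e" using e S.idems_closed by (auto simp: S.mem_down_iff)
  then show "is_join T n {\<gamma> {e}, \<gamma> (down S m e - {e})} (\<alpha> e)"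
    using extension_Un[OF K(2) K(1) K(3)] extension_down e S.idems_closed by simp
  have "gprod S m {e} (down S m e - {e}) = {}" using S.gprod_idems_eq_Int[OF sub(2) sub(1)] by auto
  then show "n (\<gamma> {e}) (\<gamma> (down S m e - {e})) = w"
    using extension_gprod[OF K(2) K(1)] extension_empty by simp
qed

end

lemma extension_unique_idems:
  assumes \<gamma>1: "extension \<gamma>1" and \<gamma>2: "extension \<gamma>2" and e: "e \<in> S.E"
  shows "\<gamma>1 {e} = \<gamma>2 {e}"
  using finite_S e
proof (induction e rule: S.idems_down_induct)
  case (less e)
  have K: "down S m e - {e} \<in> KG S m"
    using S.idems_subset_KG S.down_idems_subset[OF less(1)] by blast
  have "(\<lambda>x. \<gamma>1 {x}) ` (down S m e - {e}) = (\<lambda>x. \<gamma>2 {x}) ` (down S m e - {e})"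
    using less(2) by (intro image_cong) auto
  then have below: "\<gamma>1 (down S m e - {e}) = \<gamma>2 (down S m e - {e})"
    using extension_is_join_singletons[OF \<gamma>1 K] extension_is_join_singletons[OF \<gamma>2 K]
      T.is_join_unique by metis
  have "down S m e - {e} \<subseteq> S.E" using S.down_idems_subset[OF less(1)] by blast
  then have E: "\<gamma>1 {e} \<in> T.E" "\<gamma>2 {e} \<in> T.E" "\<gamma>1 (down S m e - {e}) \<in> T.E"
    using extension_idems[OF \<gamma>1] extension_idems[OF \<gamma>2] less(1) by auto
  show ?case
    using T.relative_complement_unique[OF E] extension_idem_singleton[OF \<gamma>1 less(1)]
      extension_idem_singleton[OF \<gamma>2 less(1)] below by simp
qed

lemma extension_unique: assumes \<gamma>1: "extension \<gamma>1" and \<gamma>2: "extension \<gamma>2" shows "\<gamma>1 = \<gamma>2"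
proof (rule extensionalityI)
  show "\<gamma>1 \<in> extensional (KG S m)" "\<gamma>2 \<in> extensional (KG S m)"
    using \<gamma>1 \<gamma>2 unfolding extension_def PiE_def by auto
  fix A assume A: "A \<in> KG S m"
  have "\<gamma>1 {x} = \<gamma>2 {x}" if "x \<in> A" for x
  proof -
    have x: "x \<in> S" using that A S.KG_closed by auto
    then have "\<gamma>1 {S.src x} = \<gamma>2 {S.src x}" using extension_unique_idems[OF \<gamma>1 \<gamma>2] by simp
    then show ?thesis using extension_singleton[OF \<gamma>1 x] extension_singleton[OF \<gamma>2 x] by simp
  qed
  then have "(\<lambda>x. \<gamma>1 {x}) ` A = (\<lambda>x. \<gamma>2 {x}) ` A" by (intro image_cong) auto
  then show "\<gamma>1 A = \<gamma>2 A"
    using extension_is_join_singletons[OF \<gamma>1 A] extension_is_join_singletons[OF \<gamma>2 A]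
      T.is_join_unique by metis
qed

end

theorem mainTheorem3:
  fixes S :: "'a set" and m :: "'a \<Rightarrow> 'a \<Rightarrow> 'a" and u :: 'a
    and T :: "'b set" and n :: "'b \<Rightarrow> 'b \<Rightarrow> 'b" and v :: 'b and w :: 'b
    and \<alpha> :: "'a \<Rightarrow> 'b"
  assumes "finite S"
    and "inverse_monoid S m u"
    and "boolean_inverse_monoid T n v w"
    and "monoid_hom S m u T n v \<alpha>"
  shows "\<exists>!\<gamma>. \<gamma> \<in> KG S m \<rightarrow>\<^sub>E T
           \<and> bim_morphism (KG S m) (gprod S m) (idems S m) {} T n v w \<gamma>
           \<and> (\<forall>a\<in>S. \<gamma> (down S m a) = \<alpha> a)"
proof -
  interpret hom_to_boolean S m u T n v w \<alpha>
    using assms by unfold_locales (auto simp: boolean_inverse_monoid_def)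
  show ?thesis
    using extension_\<Gamma> extension_unique unfolding extension_def by blast
qed

end
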